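(* Let $G$ be a finite group, let $T$ be a $G$-Tambara functor, and let $k$ be an integer (viewed as an element of each ring $T(G/H)$ via the unique ring homomorphism $\mathbb{Z} \to T(G/H)$). The following are equivalent: (1) $k$ is a unit in $T(G/G)$; (2) $k$ is a unit in $T(G/H)$ for every subgroup $H \leq G$; (3) $k$ is a unit in $T(G/e)$, where $e$ is the trivial subgroup.
   Context: For a finite group $G$, a $G$-Tambara functor $T$ (in the sense of Tambara) consists of a commutative ring $T(G/H)$ for each subgroup $H \leq G$, together with, for each inclusion $H \leq K$ of subgroups, a ring homomorphism $\mathrm{res}^K_H : T(G/K) \to T(G/H)$ (restriction), an additive group homomorphism $\mathrm{tr}^K_H : T(G/H) \to T(G/K)$ (transfer), and a multiplicative monoid homomorphism $\mathrm{nm}^K_H : T(G/H) \to T(G/K)$ (norm), and, for each $g \in G$ and $H \leq G$, a ring isomorphism $c_{g,H} : T(G/H) \to T(G/gHg^{-1})$ (conjugation), satisfying the standard Tambara functor axioms (equivalently, $T$ is a product-preserving functor from Tambara's category of bispans of finite $G$-sets to sets, with $T(G/H)$ its value on the orbit $G/H$). *)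

theory Defs
  imports "HOL-Algebra.Algebra" "HOL-Library.FuncSet"
begin

text \<open>Finite G-sets are modelled as finite G-invariant subsets of the universe
  nat \<times> 'g set, on which G acts by left translation of the second component.
  Every finite G-set is isomorphic to one of these (disjoint union of coset spaces G/H,
  distinguished by the nat tag).\<close>

type_synonym 'g gpt = "nat \<times> 'g set"

definition gact :: "('g, 'b) monoid_scheme \<Rightarrow> 'g \<Rightarrow> 'g gpt \<Rightarrow> 'g gpt" where
  "gact G g x = (fst x, l_coset G g (snd x))"

definition gset :: "('g, 'b) monoid_scheme \<Rightarrow> 'g gpt set \<Rightarrow> bool" where
  "gset G U \<longleftrightarrow> finite U \<and> (\<forall>x\<in>U. snd x \<subseteq> carrier G)
     \<and> (\<forall>g\<in>carrier G. \<forall>x\<in>U. gact G g x \<in> U)"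

definition gmap :: "('g, 'b) monoid_scheme \<Rightarrow> 'g gpt set \<Rightarrow> 'g gpt set
    \<Rightarrow> ('g gpt \<Rightarrow> 'g gpt) \<Rightarrow> bool" where
  "gmap G U Y f \<longleftrightarrow> gset G U \<and> gset G Y \<and> f \<in> U \<rightarrow>\<^sub>E Y
     \<and> (\<forall>g\<in>carrier G. \<forall>x\<in>U. f (gact G g x) = gact G g (f x))"

definition is_pullback :: "('g, 'b) monoid_scheme \<Rightarrow> 'g gpt set \<Rightarrow> 'g gpt set \<Rightarrow> 'g gpt set
    \<Rightarrow> 'g gpt set \<Rightarrow> ('g gpt \<Rightarrow> 'g gpt) \<Rightarrow> ('g gpt \<Rightarrow> 'g gpt)
    \<Rightarrow> ('g gpt \<Rightarrow> 'g gpt) \<Rightarrow> ('g gpt \<Rightarrow> 'g gpt) \<Rightarrow> bool" where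
  "is_pullback G U Y Z W f g q h \<longleftrightarrow>
     gmap G U Y f \<and> gmap G Z Y g \<and> gmap G W U q \<and> gmap G W Z h
     \<and> (\<forall>w\<in>W. f (q w) = g (h w))
     \<and> bij_betw (\<lambda>w. (q w, h w)) W {(x, z). x \<in> U \<and> z \<in> Z \<and> f x = g z}"

text \<open>Exponential diagram (Tambara): for f : U \<rightarrow> Y and p : A \<rightarrow> U, the diagram
  Y <-g- Z <-h- W -e-> A -p-> U  (with q = p o e : W \<rightarrow> U) is isomorphic to the
  canonical one Y <- \<Pi>_f A <- U \<times>_Y \<Pi>_f A -> A, i.e. W is the pullback of f and g,
  p o e = q, and z \<mapsto> (g z, x \<mapsto> e(x,z)) is a bijection Z \<rightarrow> \<Pi>_f A.\<close>
definition is_exponential :: "('g, 'b) monoid_scheme \<Rightarrow> 'g gpt set \<Rightarrow> 'g gpt set \<Rightarrow> 'g gpt set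
    \<Rightarrow> 'g gpt set \<Rightarrow> 'g gpt set \<Rightarrow> ('g gpt \<Rightarrow> 'g gpt) \<Rightarrow> ('g gpt \<Rightarrow> 'g gpt)
    \<Rightarrow> ('g gpt \<Rightarrow> 'g gpt) \<Rightarrow> ('g gpt \<Rightarrow> 'g gpt) \<Rightarrow> ('g gpt \<Rightarrow> 'g gpt)
    \<Rightarrow> ('g gpt \<Rightarrow> 'g gpt) \<Rightarrow> bool" where
  "is_exponential G A U Y Z W p f g h q e \<longleftrightarrow>
     gmap G A U p \<and> is_pullback G U Y Z W f g q h \<and> gmap G W A e
     \<and> (\<forall>w\<in>W. p (e w) = q w)
     \<and> bij_betw
         (\<lambda>z. (g z, \<lambda>x\<in>{x\<in>U. f x = g z}. e (THE w. w \<in> W \<and> q w = x \<and> h w = z)))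
         Z
         {(y, s). y \<in> Y \<and> s \<in> {x\<in>U. f x = y} \<rightarrow>\<^sub>E A \<and> (\<forall>x\<in>{x\<in>U. f x = y}. p (s x) = x)}"

text \<open>A G-Tambara functor (Tambara's definition, with ring structure given):
  R U is the commutative ring T(U); for a G-map f : U \<rightarrow> Y,
  res U Y f : T(Y) \<rightarrow> T(U) (restriction f^*), tr U Y f : T(U) \<rightarrow> T(Y) (transfer f_+),
  nm U Y f : T(U) \<rightarrow> T(Y) (norm f_\<bullet>).\<close>
definition tambara_functor :: "('g, 'b) monoid_scheme \<Rightarrow> ('g gpt set \<Rightarrow> 'r ring)
    \<Rightarrow> ('g gpt set \<Rightarrow> 'g gpt set \<Rightarrow> ('g gpt \<Rightarrow> 'g gpt) \<Rightarrow> 'r \<Rightarrow> 'r)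
    \<Rightarrow> ('g gpt set \<Rightarrow> 'g gpt set \<Rightarrow> ('g gpt \<Rightarrow> 'g gpt) \<Rightarrow> 'r \<Rightarrow> 'r)
    \<Rightarrow> ('g gpt set \<Rightarrow> 'g gpt set \<Rightarrow> ('g gpt \<Rightarrow> 'g gpt) \<Rightarrow> 'r \<Rightarrow> 'r) \<Rightarrow> bool" where
  "tambara_functor G R res tr nm \<longleftrightarrow>
     \<comment> \<open>each T(U) is a commutative ring\<close>
     (\<forall>U. gset G U \<longrightarrow> cring (R U))
     \<comment> \<open>restriction: ring homs; transfer: additive; norm: multiplicative monoid homs\<close>
   \<and> (\<forall>U Y f. gmap G U Y f \<longrightarrow>
        res U Y f \<in> ring_hom (R Y) (R U)
      \<and> (\<forall>a\<in>carrier (R U). tr U Y f a \<in> carrier (R Y))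
      \<and> (\<forall>a\<in>carrier (R U). \<forall>b\<in>carrier (R U).
           tr U Y f (a \<oplus>\<^bsub>R U\<^esub> b) = tr U Y f a \<oplus>\<^bsub>R Y\<^esub> tr U Y f b)
      \<and> (\<forall>a\<in>carrier (R U). nm U Y f a \<in> carrier (R Y))
      \<and> (\<forall>a\<in>carrier (R U). \<forall>b\<in>carrier (R U).
           nm U Y f (a \<otimes>\<^bsub>R U\<^esub> b) = nm U Y f a \<otimes>\<^bsub>R Y\<^esub> nm U Y f b)
      \<and> nm U Y f \<one>\<^bsub>R U\<^esub> = \<one>\<^bsub>R Y\<^esub>)
     \<comment> \<open>functoriality: identities\<close>
   \<and> (\<forall>U. gset G U \<longrightarrow> (\<forall>a\<in>carrier (R U).
        res U U (restrict id U) a = a \<and> tr U U (restrict id U) a = a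
      \<and> nm U U (restrict id U) a = a))
     \<comment> \<open>functoriality: composition\<close>
   \<and> (\<forall>U Y Z f g. gmap G U Y f \<longrightarrow> gmap G Y Z g \<longrightarrow>
        (\<forall>c\<in>carrier (R Z). res U Z (compose U g f) c = res U Y f (res Y Z g c))
      \<and> (\<forall>a\<in>carrier (R U). tr U Z (compose U g f) a = tr Y Z g (tr U Y f a))
      \<and> (\<forall>a\<in>carrier (R U). nm U Z (compose U g f) a = nm Y Z g (nm U Y f a)))
     \<comment> \<open>restriction sends coproducts to products (empty coproduct and binary ones)\<close>
   \<and> (\<exists>z. carrier (R {}) = {z})
   \<and> (\<forall>U1 U2. gset G U1 \<longrightarrow> gset G U2 \<longrightarrow> U1 \<inter> U2 = {} \<longrightarrow>
        bij_betw (\<lambda>a. (res U1 (U1 \<union> U2) (restrict id U1) a, res U2 (U1 \<union> U2) (restrict id U2) a))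
          (carrier (R (U1 \<union> U2))) (carrier (R U1) \<times> carrier (R U2)))
     \<comment> \<open>Beck--Chevalley for pullback squares: g^* f_+ = f'_+ g'^*, g^* f_\<bullet> = f'_\<bullet> g'^*\<close>
   \<and> (\<forall>U Y Y' U' f g g' f'. is_pullback G U Y Y' U' f g g' f' \<longrightarrow>
        (\<forall>a\<in>carrier (R U).
           res Y' Y g (tr U Y f a) = tr U' Y' f' (res U' U g' a)
         \<and> res Y' Y g (nm U Y f a) = nm U' Y' f' (res U' U g' a)))
     \<comment> \<open>distributive law for exponential diagrams: f_\<bullet> p_+ = g_+ h_\<bullet> e^*\<close>
   \<and> (\<forall>A U Y Z W p f g h q e. is_exponential G A U Y Z W p f g h q e \<longrightarrow> gmap G U Y f \<longrightarrow>
        (\<forall>a\<in>carrier (R A).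
           nm U Y f (tr A U p a) = tr Z Y g (nm W Z h (res W A e a))))"

definition orbit_set :: "('g, 'b) monoid_scheme \<Rightarrow> 'g set \<Rightarrow> 'g gpt set" where
  "orbit_set G H = {(0, l_coset G g H) | g. g \<in> carrier G}"

definition int_elem :: "'r ring \<Rightarrow> int \<Rightarrow> 'r" where
  "int_elem S k = add_pow S k (one S)"

end

theory Submission
  imports Defs "HOL-Library.Countable_Set"
begin

text \<open>Restriction is a ring homomorphism, so an integer invertible in \<open>T(G/G)\<close> stays invertible
  in every \<open>T(G/H)\<close>, in particular in \<open>T(G/e)\<close>. Conversely, suppose \<open>n\<close> is invertible in
  \<open>T(G/e)\<close> and argue by induction on \<open>|H|\<close>. Tambara's distributive law for the norm
  \<open>N : T(G/e) \<rightarrow> T(G/H)\<close> and the fold map \<open>G/e \<squnion> G/e \<rightarrow> G/e\<close> gives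
  \<open>N(a + b) = N(a) + N(b) + tr(d)\<close>, a transfer from a \<open>G\<close>-set whose stabilizers are all smaller
  than \<open>H\<close>. By induction \<open>n\<close> is invertible there, so \<open>tr(d) = n tr(d/n)\<close> is a multiple of \<open>n\<close>.
  Hence \<open>N(n) \<in> n + n T(G/H)\<close>; as \<open>N\<close> is multiplicative, \<open>N(n)\<close> is a unit, and so is \<open>n\<close>.\<close>

abbreviation incl :: "'a set \<Rightarrow> 'a \<Rightarrow> 'a" where
  "incl V \<equiv> restrict id V"

lemma hom_Units:
  assumes h: "h \<in> hom M M'" and one: "h \<one>\<^bsub>M\<^esub> = \<one>\<^bsub>M'\<^esub>" and x: "x \<in> Units M"
  shows "h x \<in> Units M'"
proof -
  obtain y where y: "x \<in> carrier M" "y \<in> carrier M"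
    "y \<otimes>\<^bsub>M\<^esub> x = \<one>\<^bsub>M\<^esub>" "x \<otimes>\<^bsub>M\<^esub> y = \<one>\<^bsub>M\<^esub>"
    using x unfolding Units_def by blast
  have "h y \<otimes>\<^bsub>M'\<^esub> h x = \<one>\<^bsub>M'\<^esub>" "h x \<otimes>\<^bsub>M'\<^esub> h y = \<one>\<^bsub>M'\<^esub>"
    using hom_mult[OF h] y one by metis+
  moreover have "h x \<in> carrier M'" "h y \<in> carrier M'"
    using hom_in_carrier[OF h] y by auto
  ultimately show ?thesis
    unfolding Units_def by blast
qed

lemma add_hom_add_pow:
  assumes "abelian_group R" "abelian_group S"
    and "h \<in> hom (add_monoid R) (add_monoid S)" "a \<in> carrier R"
  shows "h (add_pow R n a) = add_pow S (n::nat) (h a)"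
  using hom_nat_pow[OF assms(3) _ abelian_group.a_group abelian_group.a_group] assms
  by (simp add: add_pow_def)

lemma (in cring) add_pow_int_one_Units_iff:
  "add_pow R (k::int) \<one> \<in> Units R \<longleftrightarrow> add_pow R (nat \<bar>k\<bar>) \<one> \<in> Units R"
proof (cases "k \<ge> 0")
  case True
  then show ?thesis by (simp add: add_pow_int_ge)
next
  case False
  let ?x = "add_pow R (nat \<bar>k\<bar>) \<one>"
  have x: "?x \<in> carrier R" by simp
  have "add_pow R k \<one> = \<ominus> \<one> \<otimes> ?x"
    using False add_pow_int_lt[of k R] l_minus[OF one_closed x] x by simp
  moreover have "?x = \<ominus> \<one> \<otimes> (\<ominus> \<one> \<otimes> ?x)"
    using x by (simp add: l_minus)
  ultimately show ?thesis
    using Units_minus_one_closed Units_m_closed x by metis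
qed

lemma (in cring) add_pow_one_image_mod:
  assumes S: "ring S" and k: "k \<in> carrier R"
    and N: "N \<in> carrier S \<rightarrow> carrier R" "N \<one>\<^bsub>S\<^esub> = \<one>"
    and additive_mod: "\<And>a b. a \<in> carrier S \<Longrightarrow> b \<in> carrier S \<Longrightarrow>
      \<exists>t\<in>carrier R. N (a \<oplus>\<^bsub>S\<^esub> b) = N a \<oplus> N b \<oplus> k \<otimes> t"
  shows "\<exists>t\<in>carrier R. N (add_pow S m \<one>\<^bsub>S\<^esub>) = add_pow R (m::nat) \<one> \<oplus> k \<otimes> t"
proof (induction m)
  case 0
  interpret S: ring S by (fact S)
  obtain t where t: "t \<in> carrier R" and e: "N (\<zero>\<^bsub>S\<^esub> \<oplus>\<^bsub>S\<^esub> \<zero>\<^bsub>S\<^esub>) = N \<zero>\<^bsub>S\<^esub> \<oplus> N \<zero>\<^bsub>S\<^esub> \<oplus> k \<otimes> t"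
    using additive_mod by blast
  have N0: "N \<zero>\<^bsub>S\<^esub> \<in> carrier R" using N by blast
  have "N \<zero>\<^bsub>S\<^esub> \<oplus> k \<otimes> t = \<zero>"
    using e N0 k t by (simp add: a_assoc)
  then have "N \<zero>\<^bsub>S\<^esub> = \<zero> \<oplus> k \<otimes> (\<ominus> t)"
    using N0 k t by (simp add: r_minus sum_zero_eq_neg)
  then show ?case using t by auto
next
  case (Suc m)
  interpret S: ring S by (fact S)
  obtain t where t: "t \<in> carrier R" and e: "N (add_pow S m \<one>\<^bsub>S\<^esub>) = add_pow R m \<one> \<oplus> k \<otimes> t"
    using Suc by blast
  have m: "add_pow S m \<one>\<^bsub>S\<^esub> \<in> carrier S" by simp
  obtain t' where t': "t' \<in> carrier R" and e': "N (add_pow S m \<one>\<^bsub>S\<^esub> \<oplus>\<^bsub>S\<^esub> \<one>\<^bsub>S\<^esub>)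
      = N (add_pow S m \<one>\<^bsub>S\<^esub>) \<oplus> N \<one>\<^bsub>S\<^esub> \<oplus> k \<otimes> t'"
    using additive_mod[OF m S.one_closed] by blast
  have "N (add_pow S (Suc m) \<one>\<^bsub>S\<^esub>) = add_pow R (Suc m) \<one> \<oplus> k \<otimes> (t \<oplus> t')"
    using e e' t t' k N(2) by (simp add: r_distr a_ac)
  then show ?case using t t' by blast
qed

section \<open>Finite G-sets\<close>

lemma gact_pair: "gact G g (n, S) = (n, g <#\<^bsub>G\<^esub> S)"
  by (simp add: gact_def)

lemma gsetD:
  "gset G U \<Longrightarrow> finite U"
  "gset G U \<Longrightarrow> x \<in> U \<Longrightarrow> snd x \<subseteq> carrier G"
  "gset G U \<Longrightarrow> x \<in> U \<Longrightarrow> g \<in> carrier G \<Longrightarrow> gact G g x \<in> U"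
  by (auto simp: gset_def)

lemma gset_empty: "gset G {}"
  by (simp add: gset_def)

lemma gset_Un: "gset G U \<Longrightarrow> gset G V \<Longrightarrow> gset G (U \<union> V)"
  by (auto simp: gset_def)

lemma gmapD:
  "gmap G U Y f \<Longrightarrow> gset G U"
  "gmap G U Y f \<Longrightarrow> gset G Y"
  "gmap G U Y f \<Longrightarrow> x \<in> U \<Longrightarrow> f x \<in> Y"
  "gmap G U Y f \<Longrightarrow> x \<notin> U \<Longrightarrow> f x = undefined"
  "gmap G U Y f \<Longrightarrow> g \<in> carrier G \<Longrightarrow> x \<in> U \<Longrightarrow> f (gact G g x) = gact G g (f x)"
  unfolding gmap_def by (auto intro: PiE_mem PiE_arb)

lemma gmapI:
  assumes "gset G U" "gset G Y" "\<And>x. x \<in> U \<Longrightarrow> f x \<in> Y" "\<And>x. x \<notin> U \<Longrightarrow> f x = undefined"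
    and "\<And>g x. g \<in> carrier G \<Longrightarrow> x \<in> U \<Longrightarrow> f (gact G g x) = gact G g (f x)"
  shows "gmap G U Y f"
  using assms unfolding gmap_def by (auto simp: PiE_def Pi_def extensional_def)

lemma gmap_incl: "gset G V \<Longrightarrow> gset G U \<Longrightarrow> U \<subseteq> V \<Longrightarrow> gmap G U V (incl U)"
  by (rule gmapI) (auto simp: gset_def)

lemma gmap_id: "gset G V \<Longrightarrow> gmap G V V (incl V)"
  by (rule gmap_incl) auto

lemma gmap_restrict:
  assumes "gmap G V Y f" "gset G U" "U \<subseteq> V"
  shows "gmap G U Y (restrict f U)"
  by (rule gmapI) (use assms gmapD[OF assms(1)] gsetD[OF assms(2)] in auto)

lemma gmap_cod:
  assumes "gmap G V Y f" "gset G Y'" "f ` V \<subseteq> Y'"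
  shows "gmap G V Y' f"
  by (rule gmapI) (use assms gmapD[OF assms(1)] in auto)

lemma gmap_empty: "gset G Y \<Longrightarrow> gmap G {} Y (\<lambda>_. undefined)"
  by (rule gmapI) (auto simp: gset_empty)

lemma compose_incl: "compose U f (incl U) = restrict f U"
  by (rule ext) (auto simp: compose_def)

lemma gset_preimage:
  assumes "gmap G W Z h" "gset G Z'"
  shows "gset G {w \<in> W. h w \<in> Z'}"
  using gmapD[OF assms(1)] gsetD[OF assms(2)] gsetD[OF gmapD(1)[OF assms(1)]]
  unfolding gset_def by auto

context group
begin

lemma gact_mult:
  "g \<in> carrier G \<Longrightarrow> h \<in> carrier G \<Longrightarrow> snd x \<subseteq> carrier G \<Longrightarrow>
    gact G g (gact G h x) = gact G (g \<otimes> h) x"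
  by (simp add: gact_def lcos_m_assoc)

lemma gact_one: "snd x \<subseteq> carrier G \<Longrightarrow> gact G \<one> x = x"
  by (simp add: gact_def lcos_mult_one)

lemma gact_inv_gact: "g \<in> carrier G \<Longrightarrow> snd x \<subseteq> carrier G \<Longrightarrow> gact G (inv g) (gact G g x) = x"
  by (simp add: gact_mult gact_one)

lemma snd_gact_subset: "g \<in> carrier G \<Longrightarrow> snd x \<subseteq> carrier G \<Longrightarrow> snd (gact G g x) \<subseteq> carrier G"
  by (simp add: gact_def l_coset_subset_G)

lemma gset_Diff: "gset G U \<Longrightarrow> gset G V \<Longrightarrow> gset G (U - V)"
  unfolding gset_def by (metis DiffD1 DiffD2 DiffI finite_Diff gact_inv_gact inv_closed)

lemma lcos_singleton: "g <# {x} = {g \<otimes> x}"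
  by (simp add: l_coset_def)

lemma lcos_carrier: "g \<in> carrier G \<Longrightarrow> g <# carrier G = carrier G"
  using l_repr_independence[OF _ one_closed subgroup_self, of g] lcos_mult_one[of "carrier G"]
  by simp

lemma lcos_inj:
  "S \<subseteq> carrier G \<Longrightarrow> S' \<subseteq> carrier G \<Longrightarrow> g \<in> carrier G \<Longrightarrow> g <# S = g <# S' \<Longrightarrow> S = S'"
  by (metis inv_closed lcos_m_assoc l_inv lcos_mult_one)

lemma lcos_mem_iff:
  assumes "S \<subseteq> carrier G" "g \<in> carrier G" "x \<in> carrier G"
  shows "g \<otimes> x \<in> g <# S \<longleftrightarrow> x \<in> S"
  using assms by (auto simp: l_coset_def)

lemma lcos_mono: "S \<subseteq> S' \<Longrightarrow> g <# S \<subseteq> g <# S'"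
  unfolding l_coset_def by auto

end

locale finite_group = group +
  assumes finite_carrier: "finite (carrier G)"
begin

lemma orbit_set_eq_image: "orbit_set G H = (\<lambda>g. (0, g <# H)) ` carrier G"
  unfolding orbit_set_def by auto

lemma gset_orbit_set:
  assumes "H \<subseteq> carrier G"
  shows "gset G (orbit_set G H)"
  unfolding gset_def
proof (intro conjI ballI)
  show "finite (orbit_set G H)"
    unfolding orbit_set_eq_image using finite_carrier by simp
next
  fix x assume "x \<in> orbit_set G H"
  then obtain h where h: "h \<in> carrier G" "x = (0, h <# H)"
    unfolding orbit_set_def by auto
  then show "snd x \<subseteq> carrier G"
    using l_coset_subset_G[OF assms] by simp
  fix g assume "g \<in> carrier G"
  then show "gact G g x \<in> orbit_set G H"
    using h assms unfolding orbit_set_def by (auto simp: gact_pair lcos_m_assoc)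
qed

definition gstab :: "'a gpt \<Rightarrow> 'a set" where
  "gstab z = {g \<in> carrier G. gact G g z = z}"

definition gorbit :: "'a gpt \<Rightarrow> 'a gpt set" where
  "gorbit z = (\<lambda>g. gact G g z) ` carrier G"

definition gorbit_map :: "'a gpt \<Rightarrow> 'a gpt \<Rightarrow> 'a gpt" where
  "gorbit_map z = (\<lambda>y\<in>gorbit z. (0, (SOME g. g \<in> carrier G \<and> y = gact G g z) <# gstab z))"

lemma subgroup_gstab:
  assumes "snd z \<subseteq> carrier G"
  shows "subgroup (gstab z) G"
proof (rule subgroupI)
  show "gstab z \<subseteq> carrier G" "gstab z \<noteq> {}"
    using gact_one[OF assms] unfolding gstab_def by auto
next
  fix a b assume a: "a \<in> gstab z" and b: "b \<in> gstab z"
  then show "inv a \<in> gstab z"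
    using gact_inv_gact[OF _ assms] unfolding gstab_def by (metis (mono_tags, lifting) inv_closed mem_Collect_eq)
  show "a \<otimes> b \<in> gstab z"
    using a b gact_mult[OF _ _ assms, of a b] unfolding gstab_def by auto
qed

lemma gset_gorbit:
  assumes z: "snd z \<subseteq> carrier G"
  shows "gset G (gorbit z)"
  unfolding gset_def
proof (intro conjI ballI)
  show "finite (gorbit z)"
    unfolding gorbit_def using finite_carrier by simp
next
  fix x assume "x \<in> gorbit z"
  then obtain h where h: "h \<in> carrier G" "x = gact G h z"
    unfolding gorbit_def by auto
  then show "snd x \<subseteq> carrier G"
    using snd_gact_subset[OF h(1) z] by simp
  fix g assume "g \<in> carrier G"
  then show "gact G g x \<in> gorbit z"
    using h gact_mult[OF _ h(1) z] unfolding gorbit_def by auto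
qed

lemma gorbit_subset: "gset G V \<Longrightarrow> z \<in> V \<Longrightarrow> gorbit z \<subseteq> V"
  unfolding gorbit_def by (auto intro: gsetD(3))

lemma mem_gorbit_self: "snd z \<subseteq> carrier G \<Longrightarrow> z \<in> gorbit z"
  unfolding gorbit_def using gact_one[of z] by (auto intro!: image_eqI[where x = \<one>])

lemma gorbit_map_gact:
  assumes z: "snd z \<subseteq> carrier G" and g: "g \<in> carrier G"
  shows "gorbit_map z (gact G g z) = (0, g <# gstab z)"
proof -
  define g' where "g' = (SOME g'. g' \<in> carrier G \<and> gact G g z = gact G g' z)"
  have "\<exists>g'. g' \<in> carrier G \<and> gact G g z = gact G g' z"
    using g by blast
  then have g': "g' \<in> carrier G" "gact G g z = gact G g' z"
    unfolding g'_def by (metis (mono_tags, lifting) someI_ex)+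
  have "gact G (inv g \<otimes> g') z = gact G (inv g) (gact G g z)"
    using gact_mult[OF inv_closed[OF g] g'(1) z] g'(2) by simp
  then have "gact G (inv g \<otimes> g') z = z"
    using gact_inv_gact[OF g z] by simp
  then have "g' \<in> g <# gstab z"
    using subgroup.lcos_module_rev[OF subgroup_gstab[OF z] is_group g g'(1)] g g'(1)
    unfolding gstab_def by simp
  then have "g <# gstab z = g' <# gstab z"
    using l_repr_independence[OF _ g subgroup_gstab[OF z]] by blast
  moreover have "gact G g z \<in> gorbit z"
    unfolding gorbit_def using g by auto
  ultimately show ?thesis
    unfolding gorbit_map_def g'_def by simp
qed

lemma gmap_gorbit_map:
  assumes z: "snd z \<subseteq> carrier G"
  shows "gmap G (gorbit z) (orbit_set G (gstab z)) (gorbit_map z)"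
proof (rule gmapI[OF gset_gorbit[OF z] gset_orbit_set])
  show "gstab z \<subseteq> carrier G"
    unfolding gstab_def by auto
  show "gorbit_map z x \<in> orbit_set G (gstab z)" if "x \<in> gorbit z" for x
    using that gorbit_map_gact[OF z] unfolding gorbit_def orbit_set_def by auto
  show "gorbit_map z x = undefined" if "x \<notin> gorbit z" for x
    using that unfolding gorbit_map_def by simp
  show "gorbit_map z (gact G h x) = gact G h (gorbit_map z x)"
    if h: "h \<in> carrier G" and x: "x \<in> gorbit z" for h x
  proof -
    obtain g where g: "g \<in> carrier G" "x = gact G g z"
      using x unfolding gorbit_def by auto
    then have "gorbit_map z (gact G h x) = (0, (h \<otimes> g) <# gstab z)"
      using gact_mult[OF h g(1) z] gorbit_map_gact[OF z] h by simp
    also have "\<dots> = gact G h (gorbit_map z x)"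
      using gorbit_map_gact[OF z g(1)] g h by (simp add: gact_pair lcos_m_assoc gstab_def)
    finally show ?thesis .
  qed
qed

end

section \<open>The exponential diagram of the fold map\<close>

text \<open>Fix a subgroup \<open>H\<close> and let \<open>f : G/e \<rightarrow> G/H\<close> be the projection. The fold map
  \<open>p : G/e \<squnion> G/e \<rightarrow> G/e\<close> has \<open>p\<^sub>+(a, b) = a + b\<close>, so the distributive law for \<open>f\<^sub>\<bullet> p\<^sub>+\<close>
  expresses the norm of a sum. A point of \<open>\<Pi>\<^sub>f\<close> over the coset \<open>cH\<close> is a section of \<open>p\<close>
  over \<open>cH\<close>, i.e. the subset \<open>S \<subseteq> cH\<close> of points sent to the first copy. It is encoded
  as \<open>(0, cH)\<close> if \<open>S = cH\<close>, as \<open>(2, cH)\<close> if \<open>S = {}\<close>, and as \<open>(0, S)\<close> otherwise.\<close>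

context finite_group
begin

definition free_copy :: "nat \<Rightarrow> 'a gpt set" where
  "free_copy i = {(i, {g}) | g. g \<in> carrier G}"

definition fold_dom :: "'a gpt set" where
  "fold_dom = free_copy 0 \<union> free_copy 1"

definition fold_map :: "'a gpt \<Rightarrow> 'a gpt" where
  "fold_map = (\<lambda>a\<in>fold_dom. (0, snd a))"

definition coset_proj :: "'a set \<Rightarrow> 'a gpt \<Rightarrow> 'a gpt" where
  "coset_proj H = (\<lambda>u\<in>free_copy 0. (0, the_elem (snd u) <# H))"

definition empty_choices :: "'a set \<Rightarrow> 'a gpt set" where
  "empty_choices H = {(2, c <# H) | c. c \<in> carrier G}"

definition proper_choices :: "'a set \<Rightarrow> 'a gpt set" where
  "proper_choices H = {(0, S) | S. S \<noteq> {} \<and> (\<exists>c\<in>carrier G. S \<subseteq> c <# H \<and> S \<noteq> c <# H)}"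

definition choices :: "'a set \<Rightarrow> 'a gpt set" where
  "choices H = orbit_set G H \<union> (empty_choices H \<union> proper_choices H)"

definition choice_coset :: "'a set \<Rightarrow> 'a gpt \<Rightarrow> 'a gpt" where
  "choice_coset H = (\<lambda>z\<in>choices H. (0, (SOME x. x \<in> snd z) <# H))"

definition choice_section :: "'a gpt \<Rightarrow> 'a gpt \<Rightarrow> 'a gpt" where
  "choice_section z u = (if fst z = 0 \<and> the_elem (snd u) \<in> snd z then 0 else 1, snd u)"

definition pb_pairs :: "'a set \<Rightarrow> ('a gpt \<times> 'a gpt) set" where
  "pb_pairs H = {(u, z). u \<in> free_copy 0 \<and> z \<in> choices H \<and> coset_proj H u = choice_coset H z}"

text \<open>The pair \<open>((0, {x}), (i, S))\<close> of the pullback is encoded as \<open>(n, {x})\<close>, where the tag \<open>n\<close>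
  encodes the \<open>G\<close>-invariant datum \<open>(i, x\<inverse>S)\<close>.\<close>

definition pb_tags :: "(nat \<times> 'a set) set" where
  "pb_tags = {0, 2} \<times> Pow (carrier G)"

definition pb_encode :: "'a gpt \<times> 'a gpt \<Rightarrow> 'a gpt" where
  "pb_encode p = (to_nat_on pb_tags (fst (snd p), inv (the_elem (snd (fst p))) <# snd (snd p)),
     snd (fst p))"

definition pb_set :: "'a set \<Rightarrow> 'a gpt set" where
  "pb_set H = pb_encode ` pb_pairs H"

definition pb_fst :: "'a set \<Rightarrow> 'a gpt \<Rightarrow> 'a gpt" where
  "pb_fst H = (\<lambda>w\<in>pb_set H. (0, snd w))"

definition pb_snd :: "'a set \<Rightarrow> 'a gpt \<Rightarrow> 'a gpt" where
  "pb_snd H = (\<lambda>w\<in>pb_set H.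
     (fst (from_nat_into pb_tags (fst w)), the_elem (snd w) <# snd (from_nat_into pb_tags (fst w))))"

definition pb_eval :: "'a set \<Rightarrow> 'a gpt \<Rightarrow> 'a gpt" where
  "pb_eval H = (\<lambda>w\<in>pb_set H. choice_section (pb_snd H w) (pb_fst H w))"

text \<open>Inverse of \<open>z \<mapsto> (choice_coset H z, choice_section z)\<close>: recovers the choice from
  a section \<open>s\<close> over the coset \<open>snd y\<close>.\<close>

definition choice_of_section :: "'a gpt \<Rightarrow> ('a gpt \<Rightarrow> 'a gpt) \<Rightarrow> 'a gpt" where
  "choice_of_section y s =
     (let S = {x \<in> snd y. fst (s (0, {x})) = 0} in if S = {} then (2, snd y) else (0, S))"

lemma free_copy_eq_orbit_set: "free_copy 0 = orbit_set G {\<one>}"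
proof -
  have "g <# {\<one>} = {g}" if "g \<in> carrier G" for g
    using that by (simp add: lcos_singleton)
  then show ?thesis
    unfolding free_copy_def orbit_set_def by auto
qed

lemma gset_free_copy: "gset G (free_copy i)"
proof -
  have "free_copy i = (\<lambda>g. (i, {g})) ` carrier G"
    unfolding free_copy_def by auto
  then show ?thesis
    unfolding gset_def using finite_carrier by (auto simp: gact_pair lcos_singleton)
qed

lemma free_copy_disjoint: "i \<noteq> j \<Longrightarrow> free_copy i \<inter> free_copy j = {}"
  unfolding free_copy_def by auto

lemma gset_fold_dom: "gset G fold_dom"
  unfolding fold_dom_def by (intro gset_Un gset_free_copy)

lemma gmap_fold_map: "gmap G fold_dom (free_copy 0) fold_map"
proof (rule gmapI[OF gset_fold_dom gset_free_copy])
  show "fold_map a \<in> free_copy 0" if "a \<in> fold_dom" for a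
    using that unfolding fold_map_def fold_dom_def free_copy_def by auto
  show "fold_map a = undefined" if "a \<notin> fold_dom" for a
    using that unfolding fold_map_def by simp
  show "fold_map (gact G g a) = gact G g (fold_map a)" if "g \<in> carrier G" "a \<in> fold_dom" for g a
    using that gsetD(3)[OF gset_fold_dom] unfolding fold_map_def by (simp add: gact_def)
qed

lemma fold_map_free_copy_0: "restrict fold_map (free_copy 0) = incl (free_copy 0)"
  by (rule ext) (auto simp: fold_map_def fold_dom_def free_copy_def)

lemma fold_map_free_copy_1: "bij_betw (restrict fold_map (free_copy 1)) (free_copy 1) (free_copy 0)"
  by (rule bij_betw_byWitness[where f' = "\<lambda>u. (1, snd u)"])
    (auto simp: free_copy_def fold_map_def fold_dom_def)

lemma choice_section_fold_map:
  assumes "u \<in> free_copy 0"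
  shows "choice_section z u \<in> fold_dom" "fold_map (choice_section z u) = u"
proof -
  obtain x where "x \<in> carrier G" "u = (0, {x})"
    using assms unfolding free_copy_def by auto
  moreover have "choice_section z u \<in> fold_dom"
    if "x \<in> carrier G" "u = (0, {x})" for x
    using that unfolding choice_section_def fold_dom_def free_copy_def by auto
  ultimately show "choice_section z u \<in> fold_dom" "fold_map (choice_section z u) = u"
    by (auto simp: fold_map_def choice_section_def)
qed


context
  fixes H assumes H: "subgroup H G"
begin

lemma lcos_subset_carrier: "c \<in> carrier G \<Longrightarrow> c <# H \<subseteq> carrier G"
  using l_coset_subset_G[OF subgroup.subset[OF H]] .

lemma lcos_eq_of_mem: "c \<in> carrier G \<Longrightarrow> x \<in> c <# H \<Longrightarrow> x <# H = c <# H"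
  using l_repr_independence[OF _ _ H] by metis

lemma lcos_eq_of_subset: "c \<in> carrier G \<Longrightarrow> d \<in> carrier G \<Longrightarrow> c <# H \<subseteq> d <# H \<Longrightarrow> c <# H = d <# H"
  using lcos_self[OF _ H] lcos_eq_of_mem by blast

lemma coset_proj_singleton: "x \<in> carrier G \<Longrightarrow> coset_proj H (0, {x}) = (0, x <# H)"
  unfolding coset_proj_def free_copy_def by auto

lemma gmap_coset_proj: "gmap G (free_copy 0) (orbit_set G H) (coset_proj H)"
proof (rule gmapI[OF gset_free_copy gset_orbit_set[OF subgroup.subset[OF H]]])
  show "coset_proj H u \<in> orbit_set G H" if "u \<in> free_copy 0" for u
    using that coset_proj_singleton unfolding free_copy_def orbit_set_def by auto
  show "coset_proj H u = undefined" if "u \<notin> free_copy 0" for u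
    using that unfolding coset_proj_def by simp
  show "coset_proj H (gact G g u) = gact G g (coset_proj H u)"
    if g: "g \<in> carrier G" and u: "u \<in> free_copy 0" for g u
  proof -
    obtain x where x: "x \<in> carrier G" "u = (0, {x})"
      using u unfolding free_copy_def by auto
    then show ?thesis
      using g coset_proj_singleton
      by (simp add: gact_pair lcos_singleton lcos_m_assoc subgroup.subset[OF H])
  qed
qed

lemma coset_proj_fiber:
  assumes "c \<in> carrier G"
  shows "{u \<in> free_copy 0. coset_proj H u = (0, c <# H)} = {(0, {x}) | x. x \<in> c <# H}"
proof -
  have "x <# H = c <# H \<longleftrightarrow> x \<in> c <# H" if "x \<in> carrier G" for x
    using that assms lcos_eq_of_mem lcos_self[OF _ H] by metis
  then show ?thesis
    unfolding free_copy_def using coset_proj_singleton lcos_subset_carrier[OF assms] by auto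
qed

lemma choicesE:
  assumes "z \<in> choices H"
  obtains (full) c where "c \<in> carrier G" "z = (0, c <# H)"
  | (empty) c where "c \<in> carrier G" "z = (2, c <# H)"
  | (proper) c S where "c \<in> carrier G" "z = (0, S)" "S \<noteq> {}" "S \<subseteq> c <# H" "S \<noteq> c <# H"
  using assms unfolding choices_def orbit_set_def empty_choices_def proper_choices_def by blast

lemma choices_coset:
  assumes "z \<in> choices H"
  obtains c where "c \<in> carrier G" "snd z \<noteq> {}" "snd z \<subseteq> c <# H"
  using assms lcos_self[OF _ H] by (cases rule: choicesE) auto

lemma choices_subset_pb_tags: "choices H \<subseteq> pb_tags"
proof
  fix z assume z: "z \<in> choices H"
  then obtain c where "c \<in> carrier G" "snd z \<subseteq> c <# H"
    by (rule choices_coset)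
  moreover have "fst z \<in> {0, 2}"
    using z by (cases rule: choicesE) auto
  ultimately show "z \<in> pb_tags"
    unfolding pb_tags_def mem_Times_iff using lcos_subset_carrier by blast
qed

lemma finite_pb_tags: "finite pb_tags"
  unfolding pb_tags_def using finite_carrier by simp

lemma choices_carrier:
  assumes "z \<in> choices H"
  shows "snd z \<subseteq> carrier G"
  using subsetD[OF choices_subset_pb_tags assms] unfolding pb_tags_def by (simp add: mem_Times_iff)

lemma gset_empty_choices: "gset G (empty_choices H)"
proof -
  have "empty_choices H = (\<lambda>c. (2, c <# H)) ` carrier G"
    unfolding empty_choices_def by auto
  then show ?thesis
    unfolding gset_def using finite_carrier lcos_subset_carrier
    by (auto simp: gact_pair lcos_m_assoc subgroup.subset[OF H])
qed

lemma gset_proper_choices: "gset G (proper_choices H)"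
  unfolding gset_def
proof (intro conjI ballI)
  have "proper_choices H \<subseteq> pb_tags"
    using choices_subset_pb_tags unfolding choices_def by auto
  then show "finite (proper_choices H)"
    using finite_pb_tags finite_subset by blast
  fix z assume "z \<in> proper_choices H"
  then obtain S c where z: "z = (0, S)" "S \<noteq> {}" "c \<in> carrier G" "S \<subseteq> c <# H" "S \<noteq> c <# H"
    unfolding proper_choices_def by blast
  then show "snd z \<subseteq> carrier G"
    using lcos_subset_carrier by auto
  fix g assume g: "g \<in> carrier G"
  have "g <# S \<subseteq> (g \<otimes> c) <# H"
    using lcos_mono[OF z(4), of g] lcos_m_assoc[OF subgroup.subset[OF H] g z(3)] by simp
  moreover have "g <# S \<noteq> (g \<otimes> c) <# H"
    using lcos_inj[of S "c <# H" g] lcos_m_assoc[OF subgroup.subset[OF H] g z(3)] z g lcos_subset_carrier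
    by auto
  moreover have "g <# S \<noteq> {}"
    using z(2) unfolding l_coset_def by auto
  ultimately show "gact G g z \<in> proper_choices H"
    using z g unfolding proper_choices_def by (auto simp: gact_pair)
qed

lemma gset_choices: "gset G (choices H)"
  unfolding choices_def
  using gset_Un gset_orbit_set[OF subgroup.subset[OF H]] gset_empty_choices gset_proper_choices
  by blast

lemma choices_disjoint:
  "orbit_set G H \<inter> (empty_choices H \<union> proper_choices H) = {}"
  "empty_choices H \<inter> proper_choices H = {}"
proof -
  have "(0, c <# H) \<notin> proper_choices H" if c: "c \<in> carrier G" for c
  proof
    assume "(0, c <# H) \<in> proper_choices H"
    then obtain d where "d \<in> carrier G" "c <# H \<subseteq> d <# H" "c <# H \<noteq> d <# H"
      unfolding proper_choices_def by auto
    then show False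
      using lcos_eq_of_subset[OF c] by blast
  qed
  then show "orbit_set G H \<inter> (empty_choices H \<union> proper_choices H) = {}"
    unfolding orbit_set_def empty_choices_def by auto
  show "empty_choices H \<inter> proper_choices H = {}"
    unfolding empty_choices_def proper_choices_def by auto
qed

lemma choice_coset_eq:
  assumes z: "z \<in> choices H" and c: "c \<in> carrier G" "snd z \<subseteq> c <# H"
  shows "choice_coset H z = (0, c <# H)"
proof -
  have "\<exists>x. x \<in> snd z"
    using choices_coset[OF z] by blast
  then have "(SOME x. x \<in> snd z) \<in> snd z"
    by (rule someI_ex)
  then have "(SOME x. x \<in> snd z) \<in> c <# H"
    using c(2) by blast
  then show ?thesis
    unfolding choice_coset_def using z lcos_eq_of_mem[OF c(1)] by simp
qed

lemma gmap_choice_coset: "gmap G (choices H) (orbit_set G H) (choice_coset H)"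
proof (rule gmapI[OF gset_choices gset_orbit_set[OF subgroup.subset[OF H]]])
  show "choice_coset H z \<in> orbit_set G H" if z: "z \<in> choices H" for z
  proof -
    obtain c where "c \<in> carrier G" "snd z \<subseteq> c <# H"
      using choices_coset[OF z] by metis
    then show ?thesis
      using choice_coset_eq[OF z] unfolding orbit_set_def by auto
  qed
  show "choice_coset H z = undefined" if "z \<notin> choices H" for z
    using that unfolding choice_coset_def by simp
  show "choice_coset H (gact G g z) = gact G g (choice_coset H z)"
    if g: "g \<in> carrier G" and z: "z \<in> choices H" for g z
  proof -
    obtain c where c: "c \<in> carrier G" "snd z \<subseteq> c <# H"
      using choices_coset[OF z] by metis
    have "snd (gact G g z) \<subseteq> (g \<otimes> c) <# H"
      using lcos_mono[OF c(2), of g] lcos_m_assoc[OF subgroup.subset[OF H] g c(1)] by (simp add: gact_def)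
    then have "choice_coset H (gact G g z) = (0, (g \<otimes> c) <# H)"
      using choice_coset_eq gsetD(3)[OF gset_choices z g] g c by simp
    then show ?thesis
      using choice_coset_eq[OF z c] g c by (simp add: gact_pair lcos_m_assoc subgroup.subset[OF H])
  qed
qed

lemma pb_pairsE:
  assumes "p \<in> pb_pairs H"
  obtains x z where "x \<in> carrier G" "p = ((0, {x}), z)" "z \<in> choices H" "snd z \<subseteq> x <# H"
proof -
  obtain u z where p: "p = (u, z)" "u \<in> free_copy 0" "z \<in> choices H"
    "coset_proj H u = choice_coset H z"
    using assms unfolding pb_pairs_def by auto
  obtain x where x: "x \<in> carrier G" "u = (0, {x})"
    using p(2) unfolding free_copy_def by auto
  obtain c where c: "c \<in> carrier G" "snd z \<subseteq> c <# H"
    using choices_coset[OF p(3)] by metis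
  have "x <# H = c <# H"
    using p(4) choice_coset_eq[OF p(3) c] coset_proj_singleton[OF x(1)] x(2) by simp
  then show ?thesis
    using that[OF x(1) _ p(3)] p(1) x(2) c(2) by simp
qed

lemma pb_pairs_gact:
  assumes "p \<in> pb_pairs H" "g \<in> carrier G"
  shows "(gact G g (fst p), gact G g (snd p)) \<in> pb_pairs H"
proof -
  obtain u z where p: "p = (u, z)" "u \<in> free_copy 0" "z \<in> choices H"
    "coset_proj H u = choice_coset H z"
    using assms(1) unfolding pb_pairs_def by auto
  have "coset_proj H (gact G g u) = choice_coset H (gact G g z)"
    using gmapD(5)[OF gmap_coset_proj assms(2) p(2)] gmapD(5)[OF gmap_choice_coset assms(2) p(3)] p(4)
    by simp
  then show ?thesis
    using p gsetD(3)[OF gset_free_copy p(2) assms(2)] gsetD(3)[OF gset_choices p(3) assms(2)]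
    unfolding pb_pairs_def by simp
qed

lemma pb_encode_gact:
  assumes "p \<in> pb_pairs H" "g \<in> carrier G"
  shows "pb_encode (gact G g (fst p), gact G g (snd p)) = gact G g (pb_encode p)"
proof -
  obtain x z where p: "x \<in> carrier G" "p = ((0, {x}), z)" "z \<in> choices H"
    using assms(1) by (rule pb_pairsE)
  have "inv (g \<otimes> x) <# (g <# snd z) = inv x <# snd z"
    using lcos_m_assoc[OF choices_carrier[OF p(3)]] p(1) assms(2) by (simp add: inv_mult_group m_assoc)
  then show ?thesis
    using p unfolding pb_encode_def by (simp add: gact_def lcos_singleton)
qed

lemma pb_decode:
  assumes "p \<in> pb_pairs H"
  shows "pb_fst H (pb_encode p) = fst p" "pb_snd H (pb_encode p) = snd p"
proof -
  obtain x z where p: "x \<in> carrier G" "p = ((0, {x}), z)" "z \<in> choices H"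
    using assms by (rule pb_pairsE)
  have w: "pb_encode p \<in> pb_set H"
    unfolding pb_set_def using assms by blast
  have tag: "(fst z, inv x <# snd z) \<in> pb_tags"
    using choices_subset_pb_tags p(3) l_coset_subset_G[OF choices_carrier[OF p(3)] inv_closed[OF p(1)]]
    unfolding pb_tags_def by auto
  have "x <# (inv x <# snd z) = snd z"
    using p(1) choices_carrier[OF p(3)] by (simp add: lcos_m_assoc lcos_mult_one)
  then show "pb_fst H (pb_encode p) = fst p" "pb_snd H (pb_encode p) = snd p"
    using w p tag countable_finite[OF finite_pb_tags]
    unfolding pb_fst_def pb_snd_def pb_encode_def by simp_all
qed

lemma pb_setE:
  assumes "w \<in> pb_set H"
  obtains x z where "x \<in> carrier G" "((0, {x}), z) \<in> pb_pairs H" "w = pb_encode ((0, {x}), z)"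
    "pb_fst H w = (0, {x})" "pb_snd H w = z" "z \<in> choices H" "snd z \<subseteq> x <# H"
proof -
  obtain p where p: "p \<in> pb_pairs H" "w = pb_encode p"
    using assms unfolding pb_set_def by auto
  obtain x z where xz: "x \<in> carrier G" "p = ((0, {x}), z)" "z \<in> choices H" "snd z \<subseteq> x <# H"
    using p(1) by (rule pb_pairsE)
  show ?thesis
    using that[OF xz(1) _ _ _ _ xz(3,4)] p xz(2) pb_decode[OF p(1)] by simp
qed

lemma gset_pb_set: "gset G (pb_set H)"
  unfolding gset_def
proof (intro conjI ballI)
  have "pb_pairs H \<subseteq> free_copy 0 \<times> choices H"
    unfolding pb_pairs_def by auto
  then show "finite (pb_set H)"
    unfolding pb_set_def using gsetD(1)[OF gset_free_copy] gsetD(1)[OF gset_choices]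
    by (meson finite_SigmaI finite_subset finite_imageI)
  fix w assume w: "w \<in> pb_set H"
  then show "snd w \<subseteq> carrier G"
    by (elim pb_setE) (simp add: pb_encode_def)
  fix g assume g: "g \<in> carrier G"
  obtain p where p: "p \<in> pb_pairs H" "w = pb_encode p"
    using w unfolding pb_set_def by auto
  then have "gact G g w = pb_encode (gact G g (fst p), gact G g (snd p))"
    using pb_encode_gact[OF p(1) g] by simp
  then show "gact G g w \<in> pb_set H"
    using pb_pairs_gact[OF p(1) g] unfolding pb_set_def by blast
qed

lemma pb_gact:
  assumes "w \<in> pb_set H" "g \<in> carrier G"
  shows "pb_fst H (gact G g w) = gact G g (pb_fst H w)" "pb_snd H (gact G g w) = gact G g (pb_snd H w)"
proof -
  obtain p where p: "p \<in> pb_pairs H" "w = pb_encode p"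
    using assms(1) unfolding pb_set_def by auto
  then have "gact G g w = pb_encode (gact G g (fst p), gact G g (snd p))"
    using pb_encode_gact[OF p(1) assms(2)] by simp
  then show "pb_fst H (gact G g w) = gact G g (pb_fst H w)" "pb_snd H (gact G g w) = gact G g (pb_snd H w)"
    using pb_decode[OF pb_pairs_gact[OF p(1) assms(2)]] pb_decode[OF p(1)] p(2) by simp_all
qed

lemma gmap_pb_fst: "gmap G (pb_set H) (free_copy 0) (pb_fst H)"
proof (rule gmapI[OF gset_pb_set gset_free_copy])
  show "pb_fst H w \<in> free_copy 0" if "w \<in> pb_set H" for w
    using that by (rule pb_setE) (auto simp: free_copy_def)
  show "pb_fst H (gact G g w) = gact G g (pb_fst H w)" if "g \<in> carrier G" "w \<in> pb_set H" for g w
    using that by (simp add: pb_gact)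
qed (simp add: pb_fst_def)

lemma gmap_pb_snd: "gmap G (pb_set H) (choices H) (pb_snd H)"
proof (rule gmapI[OF gset_pb_set gset_choices])
  show "pb_snd H w \<in> choices H" if "w \<in> pb_set H" for w
    using that by (rule pb_setE) auto
  show "pb_snd H (gact G g w) = gact G g (pb_snd H w)" if "g \<in> carrier G" "w \<in> pb_set H" for g w
    using that by (simp add: pb_gact)
qed (simp add: pb_snd_def)

lemma pb_commutes: "w \<in> pb_set H \<Longrightarrow> coset_proj H (pb_fst H w) = choice_coset H (pb_snd H w)"
  by (elim pb_setE) (simp add: pb_pairs_def)

lemma choice_section_gact:
  assumes "z \<in> choices H" "x \<in> carrier G" "g \<in> carrier G"
  shows "choice_section (gact G g z) (gact G g (0, {x})) = gact G g (choice_section z (0, {x}))"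
  using lcos_mem_iff[OF choices_carrier[OF assms(1)] assms(3,2)]
  by (simp add: choice_section_def gact_def lcos_singleton)

lemma gmap_pb_eval: "gmap G (pb_set H) fold_dom (pb_eval H)"
proof (rule gmapI[OF gset_pb_set gset_fold_dom])
  show "pb_eval H w \<in> fold_dom" if "w \<in> pb_set H" for w
    using that choice_section_fold_map(1) gmapD(3)[OF gmap_pb_fst] unfolding pb_eval_def by simp
  show "pb_eval H w = undefined" if "w \<notin> pb_set H" for w
    using that unfolding pb_eval_def by simp
  show "pb_eval H (gact G g w) = gact G g (pb_eval H w)"
    if g: "g \<in> carrier G" and w: "w \<in> pb_set H" for g w
  proof -
    obtain x where "x \<in> carrier G" "pb_fst H w = (0, {x})" "pb_snd H w \<in> choices H"
      using w by (rule pb_setE) auto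
    then show ?thesis
      using gsetD(3)[OF gset_pb_set w g] choice_section_gact g w
      by (simp add: pb_eval_def pb_gact)
  qed
qed

lemma fold_map_pb_eval: "w \<in> pb_set H \<Longrightarrow> fold_map (pb_eval H w) = pb_fst H w"
  using choice_section_fold_map(2) gmapD(3)[OF gmap_pb_fst] unfolding pb_eval_def by simp

lemma is_pullback_pb_set_restrict:
  assumes Z': "gset G Z'" "Z' \<subseteq> choices H"
  defines "W' \<equiv> {w \<in> pb_set H. pb_snd H w \<in> Z'}"
  shows "is_pullback G (free_copy 0) (orbit_set G H) Z' W' (coset_proj H) (restrict (choice_coset H) Z')
    (restrict (pb_fst H) W') (restrict (pb_snd H) W')"
  unfolding is_pullback_def
proof (intro conjI ballI)
  have W': "gset G W'"
    unfolding W'_def using gset_preimage[OF gmap_pb_snd Z'(1)] .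
  show "gmap G (free_copy 0) (orbit_set G H) (coset_proj H)"
    by (rule gmap_coset_proj)
  show "gmap G Z' (orbit_set G H) (restrict (choice_coset H) Z')"
    using gmap_restrict[OF gmap_choice_coset Z'] .
  show "gmap G W' (free_copy 0) (restrict (pb_fst H) W')"
    using gmap_restrict[OF gmap_pb_fst W'] unfolding W'_def by auto
  show "gmap G W' Z' (restrict (pb_snd H) W')"
    using gmap_cod[OF gmap_restrict[OF gmap_pb_snd W'] Z'(1)] unfolding W'_def by auto
  show "coset_proj H (restrict (pb_fst H) W' w) = restrict (choice_coset H) Z' (restrict (pb_snd H) W' w)"
    if "w \<in> W'" for w
    using that pb_commutes unfolding W'_def by simp
  show "bij_betw (\<lambda>w. (restrict (pb_fst H) W' w, restrict (pb_snd H) W' w)) W'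
      {(u, z). u \<in> free_copy 0 \<and> z \<in> Z' \<and> coset_proj H u = restrict (choice_coset H) Z' z}"
  proof (rule bij_betw_byWitness[where f' = pb_encode])
    let ?P = "{(u, z). u \<in> free_copy 0 \<and> z \<in> Z' \<and> coset_proj H u = restrict (choice_coset H) Z' z}"
    have P: "p \<in> pb_pairs H" "pb_encode p \<in> W'" if "p \<in> ?P" for p
    proof -
      show p: "p \<in> pb_pairs H"
        using that Z'(2) unfolding pb_pairs_def by auto
      have "pb_encode p \<in> pb_set H"
        unfolding pb_set_def using p by blast
      then show "pb_encode p \<in> W'"
        using that pb_decode[OF p] unfolding W'_def by auto
    qed
    show "\<forall>w\<in>W'. pb_encode (restrict (pb_fst H) W' w, restrict (pb_snd H) W' w) = w"
      unfolding W'_def by (auto elim: pb_setE)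
    show "\<forall>p\<in>?P. (restrict (pb_fst H) W' (pb_encode p), restrict (pb_snd H) W' (pb_encode p)) = p"
      using P pb_decode by simp
    show "(\<lambda>w. (restrict (pb_fst H) W' w, restrict (pb_snd H) W' w)) ` W' \<subseteq> ?P"
      using gmapD(3)[OF gmap_pb_fst] pb_commutes unfolding W'_def by auto
    show "pb_encode ` ?P \<subseteq> W'"
      using P by blast
  qed
qed

lemma is_pullback_pb_set:
  "is_pullback G (free_copy 0) (orbit_set G H) (choices H) (pb_set H) (coset_proj H) (choice_coset H)
    (pb_fst H) (pb_snd H)"
proof -
  have "{w \<in> pb_set H. pb_snd H w \<in> choices H} = pb_set H"
    using gmapD(3)[OF gmap_pb_snd] by auto
  moreover have "restrict (choice_coset H) (choices H) = choice_coset H"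
    "restrict (pb_fst H) (pb_set H) = pb_fst H" "restrict (pb_snd H) (pb_set H) = pb_snd H"
    unfolding choice_coset_def pb_fst_def pb_snd_def by auto
  ultimately show ?thesis
    using is_pullback_pb_set_restrict[OF gset_choices order_refl] by simp
qed

lemma the_pb_elem:
  assumes "(u, z) \<in> pb_pairs H"
  shows "(THE w. w \<in> pb_set H \<and> pb_fst H w = u \<and> pb_snd H w = z) = pb_encode (u, z)"
proof (rule the_equality)
  show "pb_encode (u, z) \<in> pb_set H \<and> pb_fst H (pb_encode (u, z)) = u \<and> pb_snd H (pb_encode (u, z)) = z"
    using assms pb_decode[OF assms] unfolding pb_set_def by auto
  show "w = pb_encode (u, z)" if "w \<in> pb_set H \<and> pb_fst H w = u \<and> pb_snd H w = z" for w
    using that by (auto elim: pb_setE)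
qed

lemma choice_of_section_choice:
  assumes z: "z \<in> choices H"
  shows "choice_of_section (choice_coset H z)
    (restrict (choice_section z) {u \<in> free_copy 0. coset_proj H u = choice_coset H z}) = z"
proof -
  obtain c where c: "c \<in> carrier G" "snd z \<noteq> {}" "snd z \<subseteq> c <# H"
    using choices_coset[OF z] by metis
  have y: "choice_coset H z = (0, c <# H)"
    using choice_coset_eq[OF z c(1,3)] .
  have "{x \<in> c <# H. fst (restrict (choice_section z)
      {u \<in> free_copy 0. coset_proj H u = (0, c <# H)} (0, {x})) = 0}
    = {x \<in> c <# H. fst z = 0 \<and> x \<in> snd z}"
    using coset_proj_fiber[OF c(1)] by (auto simp: choice_section_def)
  moreover have "z = (2, c <# H)" if "fst z \<noteq> 0"
    using z that
  proof (cases rule: choicesE)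
    case (empty c')
    then show ?thesis
      using c(3) lcos_eq_of_subset[OF empty(1) c(1)] by simp
  qed auto
  ultimately show ?thesis
    using c(2,3) unfolding y choice_of_section_def Let_def by (cases z) auto
qed

lemma fold_section_value:
  assumes "s \<in> {u \<in> free_copy 0. coset_proj H u = (0, c <# H)} \<rightarrow>\<^sub>E fold_dom"
    and "\<forall>u\<in>{u \<in> free_copy 0. coset_proj H u = (0, c <# H)}. fold_map (s u) = u"
    and "c \<in> carrier G" "x \<in> c <# H"
  shows "snd (s (0, {x})) = {x}" "fst (s (0, {x})) = 0 \<or> fst (s (0, {x})) = 1"
proof -
  have u: "(0, {x}) \<in> {u \<in> free_copy 0. coset_proj H u = (0, c <# H)}"
    using coset_proj_fiber[OF assms(3)] assms(4) by auto
  then have "s (0, {x}) \<in> fold_dom" "fold_map (s (0, {x})) = (0, {x})"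
    using assms(1,2) by auto
  then show "snd (s (0, {x})) = {x}" "fst (s (0, {x})) = 0 \<or> fst (s (0, {x})) = 1"
    unfolding fold_map_def fold_dom_def free_copy_def by auto
qed

lemma choice_of_section_mem:
  assumes "y \<in> orbit_set G H"
  shows "choice_of_section y s \<in> choices H" "snd (choice_of_section y s) \<subseteq> snd y"
proof -
  obtain c where c: "c \<in> carrier G" "y = (0, c <# H)"
    using assms unfolding orbit_set_def by auto
  define S where "S = {x \<in> c <# H. fst (s (0, {x})) = 0}"
  have "(if S = {} then (2, c <# H) else (0, S)) \<in> choices H"
  proof (cases "S = {} \<or> S = c <# H")
    case True
    then show ?thesis
      using c(1) unfolding choices_def orbit_set_def empty_choices_def by auto
  next
    case False
    then show ?thesis
      using c(1) unfolding choices_def proper_choices_def S_def by auto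
  qed
  moreover have "choice_of_section y s = (if S = {} then (2, c <# H) else (0, S))"
    unfolding choice_of_section_def c(2) S_def Let_def by simp
  ultimately show "choice_of_section y s \<in> choices H" "snd (choice_of_section y s) \<subseteq> snd y"
    unfolding c(2) S_def by auto
qed

lemma section_of_choice_of_section:
  assumes y: "y \<in> orbit_set G H"
    and s: "s \<in> {u \<in> free_copy 0. coset_proj H u = y} \<rightarrow>\<^sub>E fold_dom"
      "\<forall>u\<in>{u \<in> free_copy 0. coset_proj H u = y}. fold_map (s u) = u"
  shows "restrict (choice_section (choice_of_section y s)) {u \<in> free_copy 0. coset_proj H u = y} = s"
proof
  fix u
  obtain c where c: "c \<in> carrier G" "y = (0, c <# H)"
    using y unfolding orbit_set_def by auto
  show "restrict (choice_section (choice_of_section y s)) {u \<in> free_copy 0. coset_proj H u = y} u = s u"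
  proof (cases "u \<in> {u \<in> free_copy 0. coset_proj H u = y}")
    case True
    then obtain x where x: "x \<in> c <# H" "u = (0, {x})"
      using coset_proj_fiber[OF c(1)] c(2) by auto
    define S where "S = {x \<in> c <# H. fst (s (0, {x})) = 0}"
    have z: "choice_of_section y s = (if S = {} then (2, c <# H) else (0, S))"
      unfolding choice_of_section_def c(2) S_def Let_def by simp
    note su = fold_section_value[OF s[unfolded c(2)] c(1) x(1)]
    have "fst (choice_section (choice_of_section y s) u) = fst (s u)"
    proof (cases "S = {}")
      case True
      then show ?thesis
        using z x su(2) unfolding S_def by (auto simp: choice_section_def)
    next
      case False
      then show ?thesis
        using z x su(2) unfolding S_def by (auto simp: choice_section_def)
    qed
    moreover have "snd (choice_section (choice_of_section y s) u) = snd (s u)"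
      using x su(1) by (simp add: choice_section_def)
    ultimately have "choice_section (choice_of_section y s) u = s u"
      by (rule prod_eqI)
    then show ?thesis
      using True by simp
  next
    case False
    then show ?thesis
      using False PiE_arb[OF s(1) False] by auto
  qed
qed

lemma bij_betw_choices_sections:
  "bij_betw
    (\<lambda>z. (choice_coset H z, restrict (choice_section z) {u \<in> free_copy 0. coset_proj H u = choice_coset H z}))
    (choices H)
    {(y, s). y \<in> orbit_set G H \<and> s \<in> {u \<in> free_copy 0. coset_proj H u = y} \<rightarrow>\<^sub>E fold_dom
       \<and> (\<forall>u\<in>{u \<in> free_copy 0. coset_proj H u = y}. fold_map (s u) = u)}"
proof -
  let ?F = "\<lambda>y. {u \<in> free_copy 0. coset_proj H u = y}"
  let ?T = "{(y, s). y \<in> orbit_set G H \<and> s \<in> ?F y \<rightarrow>\<^sub>E fold_dom \<and> (\<forall>u\<in>?F y. fold_map (s u) = u)}"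
  let ?f = "\<lambda>z. (choice_coset H z, restrict (choice_section z) (?F (choice_coset H z)))"
  have left: "\<forall>z\<in>choices H. case_prod choice_of_section (?f z) = z"
    using choice_of_section_choice by simp
  have right: "\<forall>p\<in>?T. ?f (case_prod choice_of_section p) = p"
  proof (intro ballI)
    fix p assume "p \<in> ?T"
    then obtain y s where p: "p = (y, s)" and y: "y \<in> orbit_set G H"
      and s: "s \<in> ?F y \<rightarrow>\<^sub>E fold_dom" "\<forall>u\<in>?F y. fold_map (s u) = u"
      by auto
    obtain c where c: "c \<in> carrier G" "y = (0, c <# H)"
      using y unfolding orbit_set_def by auto
    have "choice_coset H (choice_of_section y s) = y"
      using choice_coset_eq[OF choice_of_section_mem(1)[OF y] c(1)] choice_of_section_mem(2)[OF y] c(2)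
      by simp
    then show "?f (case_prod choice_of_section p) = p"
      using section_of_choice_of_section[OF y s] p by simp
  qed
  have img1: "?f ` choices H \<subseteq> ?T"
  proof (rule image_subsetI)
    fix z assume z: "z \<in> choices H"
    have "restrict (choice_section z) (?F (choice_coset H z)) \<in> ?F (choice_coset H z) \<rightarrow>\<^sub>E fold_dom"
      using choice_section_fold_map(1) by auto
    then show "?f z \<in> ?T"
      using gmapD(3)[OF gmap_choice_coset z] choice_section_fold_map(2) by auto
  qed
  have img2: "case_prod choice_of_section ` ?T \<subseteq> choices H"
    using choice_of_section_mem(1) by auto
  show ?thesis
    by (rule bij_betw_byWitness[OF left right img1 img2])
qed

lemma is_exponential_fold:
  "is_exponential G fold_dom (free_copy 0) (orbit_set G H) (choices H) (pb_set H)
    fold_map (coset_proj H) (choice_coset H) (pb_snd H) (pb_fst H) (pb_eval H)"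
proof -
  have "(\<lambda>u\<in>{u \<in> free_copy 0. coset_proj H u = choice_coset H z}.
        pb_eval H (THE w. w \<in> pb_set H \<and> pb_fst H w = u \<and> pb_snd H w = z))
      = restrict (choice_section z) {u \<in> free_copy 0. coset_proj H u = choice_coset H z}"
    if z: "z \<in> choices H" for z
  proof (rule restrict_ext)
    fix u assume "u \<in> {u \<in> free_copy 0. coset_proj H u = choice_coset H z}"
    then have p: "(u, z) \<in> pb_pairs H"
      using z unfolding pb_pairs_def by auto
    have "pb_encode (u, z) \<in> pb_set H"
      unfolding pb_set_def using p by blast
    then show "pb_eval H (THE w. w \<in> pb_set H \<and> pb_fst H w = u \<and> pb_snd H w = z) = choice_section z u"
      using the_pb_elem[OF p] pb_decode[OF p] unfolding pb_eval_def by simp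
  qed
  then have "bij_betw
      (\<lambda>z. (choice_coset H z, \<lambda>u\<in>{u \<in> free_copy 0. coset_proj H u = choice_coset H z}.
        pb_eval H (THE w. w \<in> pb_set H \<and> pb_fst H w = u \<and> pb_snd H w = z)))
      (choices H)
      {(y, s). y \<in> orbit_set G H \<and> s \<in> {u \<in> free_copy 0. coset_proj H u = y} \<rightarrow>\<^sub>E fold_dom
        \<and> (\<forall>u\<in>{u \<in> free_copy 0. coset_proj H u = y}. fold_map (s u) = u)}"
    by (intro bij_betw_cong[THEN iffD1, OF _ bij_betw_choices_sections]) simp
  then show ?thesis
    unfolding is_exponential_def
    using gmap_fold_map is_pullback_pb_set gmap_pb_eval fold_map_pb_eval by blast
qed

lemma pb_eval_full:
  assumes "w \<in> pb_set H" "pb_snd H w \<in> orbit_set G H"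
  shows "pb_eval H w = pb_fst H w"
proof -
  obtain x z where xz: "x \<in> carrier G" "pb_fst H w = (0, {x})" "pb_snd H w = z" "snd z \<subseteq> x <# H"
    using assms(1) by (rule pb_setE) auto
  obtain d where d: "d \<in> carrier G" "z = (0, d <# H)"
    using assms(2) xz(3) unfolding orbit_set_def by auto
  have "x \<in> snd z"
    using lcos_eq_of_subset[OF d(1) xz(1)] xz(4) d(2) lcos_self[OF xz(1) H] by simp
  then show ?thesis
    using assms(1) xz(2,3) d(2) unfolding pb_eval_def by (simp add: choice_section_def)
qed

lemma pb_eval_empty:
  assumes "w \<in> pb_set H" "pb_snd H w \<in> empty_choices H"
  shows "pb_eval H w \<in> free_copy 1"
proof -
  obtain x where "x \<in> carrier G" "pb_fst H w = (0, {x})"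
    using assms(1) by (rule pb_setE) auto
  moreover have "fst (pb_snd H w) = 2"
    using assms(2) unfolding empty_choices_def by auto
  ultimately show ?thesis
    using assms(1) unfolding pb_eval_def free_copy_def by (simp add: choice_section_def)
qed

lemma choice_coset_full: "restrict (choice_coset H) (orbit_set G H) = incl (orbit_set G H)"
proof (rule ext)
  fix z
  show "restrict (choice_coset H) (orbit_set G H) z = incl (orbit_set G H) z"
  proof (cases "z \<in> orbit_set G H")
    case True
    then obtain c where c: "c \<in> carrier G" "z = (0, c <# H)"
      unfolding orbit_set_def by auto
    have "z \<in> choices H"
      using True unfolding choices_def by auto
    then show ?thesis
      using choice_coset_eq[of z c] c True by simp
  qed simp
qed

lemma bij_betw_choice_coset_empty:
  "bij_betw (restrict (choice_coset H) (empty_choices H)) (empty_choices H) (orbit_set G H)"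
proof -
  have "choice_coset H (2, c <# H) = (0, c <# H)" if "c \<in> carrier G" for c
    using that choice_coset_eq[of "(2, c <# H)" c] unfolding choices_def empty_choices_def by auto
  then show ?thesis
    by (intro bij_betw_byWitness[where f' = "\<lambda>y. (2, snd y)"])
      (auto simp: empty_choices_def orbit_set_def)
qed

lemma card_gstab_proper_choices:
  assumes "z \<in> proper_choices H"
  shows "card (gstab z) < card H"
proof -
  obtain S c where z: "z = (0, S)" "S \<noteq> {}" "c \<in> carrier G" "S \<subseteq> c <# H" "S \<noteq> c <# H"
    using assms unfolding proper_choices_def by blast
  obtain x0 where x0: "x0 \<in> S"
    using z(2) by blast
  have x0c: "x0 \<in> carrier G"
    using x0 z(3,4) lcos_subset_carrier by blast
  have stab: "s \<in> carrier G" "s <# S = S" if "s \<in> gstab z" for s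
    using that unfolding gstab_def z(1) by (auto simp: gact_pair)
  have "inj_on (\<lambda>s. s \<otimes> x0) (gstab z)"
    using stab(1) x0c by (intro inj_onI) (metis r_cancel)
  moreover have "(\<lambda>s. s \<otimes> x0) ` gstab z \<subseteq> S"
    using stab x0 unfolding l_coset_def by blast
  moreover have fin: "finite (c <# H)"
    using finite_subset[OF lcos_subset_carrier[OF z(3)] finite_carrier] .
  ultimately have "card (gstab z) \<le> card S"
    using card_inj_on_le finite_subset[OF z(4)] by blast
  also have "\<dots> < card (c <# H)"
    using psubset_card_mono[OF fin] z(4,5) by blast
  also have "\<dots> = card H"
  proof -
    have "c <# H \<in> lcosets H"
      unfolding LCOSETS_def using z(3) by blast
    then show ?thesis
      using l_card_cosets_equal[OF _ subgroup.subset[OF H] finite_carrier] by simp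
  qed
  finally show ?thesis .
qed

end

end

section \<open>Tambara functors\<close>

locale tambara = finite_group G for G :: "('g, 'b) monoid_scheme" (structure) +
  fixes R :: "'g gpt set \<Rightarrow> 'r ring"
    and res tr nm :: "'g gpt set \<Rightarrow> 'g gpt set \<Rightarrow> ('g gpt \<Rightarrow> 'g gpt) \<Rightarrow> 'r \<Rightarrow> 'r"
  assumes tambara: "tambara_functor G R res tr nm"
begin

lemma cring_R: "gset G U \<Longrightarrow> cring (R U)"
  using tambara unfolding tambara_functor_def by simp

lemma res_ring_hom: "gmap G U Y f \<Longrightarrow> res U Y f \<in> ring_hom (R Y) (R U)"
  using tambara unfolding tambara_functor_def by simp

lemma tr_closed: "gmap G U Y f \<Longrightarrow> a \<in> carrier (R U) \<Longrightarrow> tr U Y f a \<in> carrier (R Y)"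
  using tambara unfolding tambara_functor_def by simp

lemma tr_add:
  "gmap G U Y f \<Longrightarrow> a \<in> carrier (R U) \<Longrightarrow> b \<in> carrier (R U) \<Longrightarrow>
    tr U Y f (a \<oplus>\<^bsub>R U\<^esub> b) = tr U Y f a \<oplus>\<^bsub>R Y\<^esub> tr U Y f b"
  using tambara unfolding tambara_functor_def by simp

lemma nm_closed: "gmap G U Y f \<Longrightarrow> a \<in> carrier (R U) \<Longrightarrow> nm U Y f a \<in> carrier (R Y)"
  using tambara unfolding tambara_functor_def by simp

lemma nm_mult:
  "gmap G U Y f \<Longrightarrow> a \<in> carrier (R U) \<Longrightarrow> b \<in> carrier (R U) \<Longrightarrow>
    nm U Y f (a \<otimes>\<^bsub>R U\<^esub> b) = nm U Y f a \<otimes>\<^bsub>R Y\<^esub> nm U Y f b"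
  using tambara unfolding tambara_functor_def by simp

lemma nm_one: "gmap G U Y f \<Longrightarrow> nm U Y f \<one>\<^bsub>R U\<^esub> = \<one>\<^bsub>R Y\<^esub>"
  using tambara unfolding tambara_functor_def by simp

lemma res_id: "gset G U \<Longrightarrow> a \<in> carrier (R U) \<Longrightarrow> res U U (incl U) a = a"
  using tambara unfolding tambara_functor_def by simp

lemma tr_id: "gset G U \<Longrightarrow> a \<in> carrier (R U) \<Longrightarrow> tr U U (incl U) a = a"
  using tambara unfolding tambara_functor_def by simp

lemma res_compose:
  "gmap G U Y f \<Longrightarrow> gmap G Y Z g \<Longrightarrow> c \<in> carrier (R Z) \<Longrightarrow>
    res U Z (compose U g f) c = res U Y f (res Y Z g c)"
  using tambara unfolding tambara_functor_def by simp

lemma tr_compose: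
  "gmap G U Y f \<Longrightarrow> gmap G Y Z g \<Longrightarrow> a \<in> carrier (R U) \<Longrightarrow>
    tr U Z (compose U g f) a = tr Y Z g (tr U Y f a)"
  using tambara unfolding tambara_functor_def by simp

lemma carrier_R_empty: "\<exists>z. carrier (R {}) = {z}"
  using tambara unfolding tambara_functor_def by simp

lemma bij_betw_res_Un:
  "gset G U1 \<Longrightarrow> gset G U2 \<Longrightarrow> U1 \<inter> U2 = {} \<Longrightarrow>
    bij_betw (\<lambda>a. (res U1 (U1 \<union> U2) (incl U1) a, res U2 (U1 \<union> U2) (incl U2) a))
      (carrier (R (U1 \<union> U2))) (carrier (R U1) \<times> carrier (R U2))"
  using tambara unfolding tambara_functor_def by simp

lemma res_tr_pullback:
  "is_pullback G U Y Y' U' f g g' f' \<Longrightarrow> a \<in> carrier (R U) \<Longrightarrow>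
    res Y' Y g (tr U Y f a) = tr U' Y' f' (res U' U g' a)"
  using tambara unfolding tambara_functor_def by simp

lemma res_nm_pullback:
  "is_pullback G U Y Y' U' f g g' f' \<Longrightarrow> a \<in> carrier (R U) \<Longrightarrow>
    res Y' Y g (nm U Y f a) = nm U' Y' f' (res U' U g' a)"
  using tambara unfolding tambara_functor_def by simp

lemma nm_tr_exponential:
  "is_exponential G A U Y Z W p f g h q e \<Longrightarrow> gmap G U Y f \<Longrightarrow> a \<in> carrier (R A) \<Longrightarrow>
    nm U Y f (tr A U p a) = tr Z Y g (nm W Z h (res W A e a))"
  using tambara unfolding tambara_functor_def by simp

lemma ring_R: "gset G U \<Longrightarrow> ring (R U)"
  using cring_R cring.axioms(1) by blast

lemma tr_hom: "gmap G U Y f \<Longrightarrow> tr U Y f \<in> hom (add_monoid (R U)) (add_monoid (R Y))"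
  by (auto simp: hom_def tr_closed tr_add)

lemma tr_add_pow:
  "gmap G U Y f \<Longrightarrow> a \<in> carrier (R U) \<Longrightarrow>
    tr U Y f (add_pow (R U) (n::nat) a) = add_pow (R Y) n (tr U Y f a)"
  by (rule add_hom_add_pow[OF ring.is_abelian_group ring.is_abelian_group tr_hom])
    (auto simp: ring_R gmapD)

lemma tr_zero:
  assumes f: "gmap G U Y f"
  shows "tr U Y f \<zero>\<^bsub>R U\<^esub> = \<zero>\<^bsub>R Y\<^esub>"
proof -
  interpret U: ring "R U" using ring_R[OF gmapD(1)[OF f]] .
  interpret Y: ring "R Y" using ring_R[OF gmapD(2)[OF f]] .
  show ?thesis
    using tr_add_pow[OF f U.zero_closed, of 0] by simp
qed

lemma res_add_pow_one:
  assumes f: "gmap G U Y f"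
  shows "res U Y f (add_pow (R Y) (n::nat) \<one>\<^bsub>R Y\<^esub>) = add_pow (R U) n \<one>\<^bsub>R U\<^esub>"
proof -
  have "res U Y f \<in> hom (add_monoid (R Y)) (add_monoid (R U))"
    using res_ring_hom[OF f] by (auto simp: hom_def ring_hom_def)
  then show ?thesis
    using add_hom_add_pow[OF ring.is_abelian_group ring.is_abelian_group]
      ring_R gmapD[OF f] ring_hom_one[OF res_ring_hom[OF f]] ring.ring_simprules(6)
    by metis
qed

lemma res_Units:
  assumes f: "gmap G U Y f" and x: "x \<in> Units (R Y)"
  shows "res U Y f x \<in> Units (R U)"
proof (rule hom_Units[OF _ _ x])
  show "res U Y f \<in> hom (R Y) (R U)"
    using res_ring_hom[OF f] by (auto simp: hom_def ring_hom_def)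
  show "res U Y f \<one>\<^bsub>R Y\<^esub> = \<one>\<^bsub>R U\<^esub>"
    using res_ring_hom[OF f] by (rule ring_hom_one)
qed

lemma res_incl_incl:
  assumes "gset G V" "gset G V'" "gset G V''" "V'' \<subseteq> V'" "V' \<subseteq> V" "c \<in> carrier (R V)"
  shows "res V'' V' (incl V'') (res V' V (incl V') c) = res V'' V (incl V'') c"
proof -
  have "compose V'' (incl V') (incl V'') = incl V''"
    using assms(4) by (intro ext) (auto simp: compose_def)
  then show ?thesis
    using res_compose[OF gmap_incl[OF assms(2,3,4)] gmap_incl[OF assms(1,2,5)] assms(6)] by simp
qed

lemma is_pullback_self:
  assumes "gmap G V Y \<phi>" "inj_on \<phi> V"
  shows "is_pullback G V Y V V \<phi> \<phi> (incl V) (incl V)"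
proof -
  have "bij_betw (\<lambda>w. (incl V w, incl V w)) V {(x, z). x \<in> V \<and> z \<in> V \<and> \<phi> x = \<phi> z}"
    using assms(2) unfolding bij_betw_def inj_on_def by (auto simp: image_def)
  then show ?thesis
    unfolding is_pullback_def using assms(1) gmap_id[OF gmapD(1)[OF assms(1)]] by auto
qed

lemma res_tr_inj:
  assumes "gmap G V Y \<phi>" "inj_on \<phi> V" "a \<in> carrier (R V)"
  shows "res V Y \<phi> (tr V Y \<phi> a) = a"
  using res_tr_pullback[OF is_pullback_self[OF assms(1,2)] assms(3)]
    tr_id[OF gmapD(1)[OF assms(1)] assms(3)] res_id[OF gmapD(1)[OF assms(1)] assms(3)]
  by simp

lemma tr_res_bij:
  assumes \<phi>: "gmap G V Y \<phi>" and bij: "bij_betw \<phi> V Y" and y: "y \<in> carrier (R Y)"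
  shows "tr V Y \<phi> (res V Y \<phi> y) = y"
proof -
  let ?\<psi> = "restrict (inv_into V \<phi>) Y"
  have gV: "gset G V" and gY: "gset G Y"
    using gmapD[OF \<phi>] by auto
  have \<psi>: "gmap G Y V ?\<psi>"
  proof (rule gmapI[OF gY gV])
    show "?\<psi> z \<in> V" if "z \<in> Y" for z
      using that bij by (simp add: bij_betw_imp_surj_on inv_into_into)
    show "?\<psi> (gact G g z) = gact G g (?\<psi> z)" if g: "g \<in> carrier G" and z: "z \<in> Y" for g z
    proof -
      let ?x = "inv_into V \<phi> z"
      have x: "?x \<in> V" "\<phi> ?x = z"
        using z bij by (auto simp: bij_betw_imp_surj_on inv_into_into bij_betw_inv_into_right)
      then have "\<phi> (gact G g ?x) = gact G g z"
        using gmapD(5)[OF \<phi> g] by simp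
      then have "inv_into V \<phi> (gact G g z) = gact G g ?x"
        using bij_betw_inv_into_left[OF bij gsetD(3)[OF gV x(1) g]] by simp
      then show ?thesis
        using z gsetD(3)[OF gY z g] by simp
    qed
  qed simp
  have "compose Y \<phi> ?\<psi> = incl Y"
    using bij by (intro ext) (auto simp: compose_def bij_betw_inv_into_right)
  then have res_inv: "res Y V ?\<psi> (res V Y \<phi> u) = u" if "u \<in> carrier (R Y)" for u
    using res_compose[OF \<psi> \<phi> that] res_id[OF gY that] by simp
  have ry: "res V Y \<phi> y \<in> carrier (R V)"
    using ring_hom_closed[OF res_ring_hom[OF \<phi>] y] .
  have "res V Y \<phi> (tr V Y \<phi> (res V Y \<phi> y)) = res V Y \<phi> y"
    using res_tr_inj[OF \<phi> bij_betw_imp_inj_on[OF bij] ry] .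
  then show ?thesis
    using res_inv[OF tr_closed[OF \<phi> ry]] res_inv[OF y] by metis
qed

lemma is_pullback_preimage:
  assumes h: "gmap G W Z h" and Z': "gset G Z'" "Z' \<subseteq> Z"
  defines "W' \<equiv> {w \<in> W. h w \<in> Z'}"
  shows "is_pullback G W Z Z' W' h (incl Z') (incl W') (restrict h W')"
proof -
  have gW': "gset G W'"
    unfolding W'_def by (rule gset_preimage[OF h Z'(1)])
  have "gmap G W' W (incl W')"
    by (rule gmap_incl[OF gmapD(1)[OF h] gW']) (auto simp: W'_def)
  moreover have "gmap G W' Z' (restrict h W')"
    by (rule gmap_cod[OF gmap_restrict[OF h gW'] Z'(1)]) (auto simp: W'_def)
  moreover have "bij_betw (\<lambda>w. (incl W' w, restrict h W' w)) W' {(x, z). x \<in> W \<and> z \<in> Z' \<and> h x = incl Z' z}"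
    unfolding bij_betw_def inj_on_def W'_def by (auto simp: image_def)
  ultimately show ?thesis
    unfolding is_pullback_def W'_def using h gmap_incl[OF gmapD(2)[OF h] Z'] by auto
qed

lemma res_nm_preimage:
  assumes "gmap G W Z h" "gset G Z'" "Z' \<subseteq> Z" "c \<in> carrier (R W)"
  shows "res Z' Z (incl Z') (nm W Z h c) =
    nm {w \<in> W. h w \<in> Z'} Z' (restrict h {w \<in> W. h w \<in> Z'}) (res {w \<in> W. h w \<in> Z'} W (incl {w \<in> W. h w \<in> Z'}) c)"
  using res_nm_pullback[OF is_pullback_preimage[OF assms(1-3)] assms(4)] .

lemma res_tr_disjoint:
  assumes U: "gset G U1" "gset G U2" "U1 \<inter> U2 = {}" and a: "a \<in> carrier (R U2)"
  shows "res U1 (U1 \<union> U2) (incl U1) (tr U2 (U1 \<union> U2) (incl U2) a) = \<zero>\<^bsub>R U1\<^esub>"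
proof -
  have "is_pullback G U2 (U1 \<union> U2) U1 {} (incl U2) (incl U1) (\<lambda>_. undefined) (\<lambda>_. undefined)"
    unfolding is_pullback_def using U gmap_empty[OF U(1)] gmap_empty[OF U(2)]
    by (auto simp: gmap_incl gset_Un bij_betw_def)
  then have "res U1 (U1 \<union> U2) (incl U1) (tr U2 (U1 \<union> U2) (incl U2) a)
      = tr {} U1 (\<lambda>_. undefined) (res {} U2 (\<lambda>_. undefined) a)"
    using res_tr_pullback a by blast
  moreover have "res {} U2 (\<lambda>_. undefined) a = \<zero>\<^bsub>R {}\<^esub>"
    using ring_hom_closed[OF res_ring_hom[OF gmap_empty[OF U(2)]] a] carrier_R_empty
      ring.ring_simprules(2)[OF ring_R[OF gset_empty]] by auto
  ultimately show ?thesis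
    using tr_zero[OF gmap_empty[OF U(1)]] by simp
qed

lemma R_Un_eqI:
  assumes "gset G U1" "gset G U2" "U1 \<inter> U2 = {}"
    and "x \<in> carrier (R (U1 \<union> U2))" "y \<in> carrier (R (U1 \<union> U2))"
    and "res U1 (U1 \<union> U2) (incl U1) x = res U1 (U1 \<union> U2) (incl U1) y"
    and "res U2 (U1 \<union> U2) (incl U2) x = res U2 (U1 \<union> U2) (incl U2) y"
  shows "x = y"
  using bij_betw_res_Un[OF assms(1-3)] assms(4-7) unfolding bij_betw_def inj_on_def by auto

lemma R_Un_exists:
  assumes "gset G U1" "gset G U2" "U1 \<inter> U2 = {}" "a1 \<in> carrier (R U1)" "a2 \<in> carrier (R U2)"
  obtains x where "x \<in> carrier (R (U1 \<union> U2))"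
    "res U1 (U1 \<union> U2) (incl U1) x = a1" "res U2 (U1 \<union> U2) (incl U2) x = a2"
proof -
  have "(a1, a2) \<in> (\<lambda>a. (res U1 (U1 \<union> U2) (incl U1) a, res U2 (U1 \<union> U2) (incl U2) a))
      ` carrier (R (U1 \<union> U2))"
    using bij_betw_res_Un[OF assms(1-3)] assms(4,5) unfolding bij_betw_def by simp
  then show ?thesis
    using that by blast
qed

lemma tr_Un:
  assumes U: "gset G U1" "gset G U2" "U1 \<inter> U2 = {}"
    and f: "gmap G (U1 \<union> U2) Y f" and x: "x \<in> carrier (R (U1 \<union> U2))"
  shows "tr (U1 \<union> U2) Y f x = tr U1 Y (restrict f U1) (res U1 (U1 \<union> U2) (incl U1) x)
     \<oplus>\<^bsub>R Y\<^esub> tr U2 Y (restrict f U2) (res U2 (U1 \<union> U2) (incl U2) x)"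
proof -
  let ?V = "U1 \<union> U2"
  have gV: "gset G ?V" using gset_Un[OF U(1,2)] .
  have i1: "gmap G U1 ?V (incl U1)" and i2: "gmap G U2 ?V (incl U2)"
    using gmap_incl[OF gV U(1)] gmap_incl[OF gV U(2)] by auto
  interpret V: cring "R ?V" using cring_R[OF gV] .
  interpret U1: cring "R U1" using cring_R[OF U(1)] .
  interpret U2: cring "R U2" using cring_R[OF U(2)] .
  define a1 where "a1 = res U1 ?V (incl U1) x"
  define a2 where "a2 = res U2 ?V (incl U2) x"
  have a: "a1 \<in> carrier (R U1)" "a2 \<in> carrier (R U2)"
    unfolding a1_def a2_def using ring_hom_closed[OF res_ring_hom] i1 i2 x by auto
  define x1 where "x1 = tr U1 ?V (incl U1) a1"
  define x2 where "x2 = tr U2 ?V (incl U2) a2"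
  have x12: "x1 \<in> carrier (R ?V)" "x2 \<in> carrier (R ?V)"
    unfolding x1_def x2_def using tr_closed i1 i2 a by auto
  have "res U1 ?V (incl U1) x1 = a1" "res U2 ?V (incl U2) x2 = a2"
    unfolding x1_def x2_def using res_tr_inj i1 i2 a by (auto simp: inj_on_def)
  moreover have "res U1 ?V (incl U1) x2 = \<zero>\<^bsub>R U1\<^esub>"
    unfolding x2_def by (rule res_tr_disjoint[OF U a(2)])
  moreover have "res U2 ?V (incl U2) x1 = \<zero>\<^bsub>R U2\<^esub>"
    using res_tr_disjoint[OF U(2,1) _ a(1)] U(3) unfolding x1_def by (simp add: Un_commute Int_commute)
  ultimately have "x = x1 \<oplus>\<^bsub>R ?V\<^esub> x2"
    using ring_hom_add[OF res_ring_hom[OF i1] x12] ring_hom_add[OF res_ring_hom[OF i2] x12] a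
    by (intro R_Un_eqI[OF U x V.add.m_closed[OF x12]]) (auto simp: a1_def a2_def)
  then have "tr ?V Y f x = tr ?V Y f x1 \<oplus>\<^bsub>R Y\<^esub> tr ?V Y f x2"
    using tr_add[OF f x12] by simp
  also have "\<dots> = tr U1 Y (restrict f U1) a1 \<oplus>\<^bsub>R Y\<^esub> tr U2 Y (restrict f U2) a2"
    unfolding x1_def x2_def using tr_compose[OF i1 f] tr_compose[OF i2 f] a
    by (simp add: compose_incl)
  finally show ?thesis
    unfolding a1_def a2_def .
qed

lemma add_pow_one_Units_Un:
  assumes U: "gset G U1" "gset G U2" "U1 \<inter> U2 = {}"
    and u1: "add_pow (R U1) (n::nat) \<one>\<^bsub>R U1\<^esub> \<in> Units (R U1)"
    and u2: "add_pow (R U2) n \<one>\<^bsub>R U2\<^esub> \<in> Units (R U2)"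
  shows "add_pow (R (U1 \<union> U2)) n \<one>\<^bsub>R (U1 \<union> U2)\<^esub> \<in> Units (R (U1 \<union> U2))"
proof -
  let ?V = "U1 \<union> U2"
  have gV: "gset G ?V" using gset_Un[OF U(1,2)] .
  have i1: "gmap G U1 ?V (incl U1)" and i2: "gmap G U2 ?V (incl U2)"
    using gmap_incl[OF gV U(1)] gmap_incl[OF gV U(2)] by auto
  interpret V: cring "R ?V" using cring_R[OF gV] .
  interpret U1: cring "R U1" using cring_R[OF U(1)] .
  interpret U2: cring "R U2" using cring_R[OF U(2)] .
  let ?k = "add_pow (R ?V) n \<one>\<^bsub>R ?V\<^esub>"
  obtain v where v: "v \<in> carrier (R ?V)"
    "res U1 ?V (incl U1) v = inv\<^bsub>R U1\<^esub> (add_pow (R U1) n \<one>\<^bsub>R U1\<^esub>)"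
    "res U2 ?V (incl U2) v = inv\<^bsub>R U2\<^esub> (add_pow (R U2) n \<one>\<^bsub>R U2\<^esub>)"
    using R_Un_exists[OF U U1.Units_inv_closed[OF u1] U2.Units_inv_closed[OF u2]] by blast
  have "?k \<otimes>\<^bsub>R ?V\<^esub> v = \<one>\<^bsub>R ?V\<^esub>"
  proof (rule R_Un_eqI[OF U V.m_closed[OF _ v(1)] V.one_closed])
    show "res U1 ?V (incl U1) (?k \<otimes>\<^bsub>R ?V\<^esub> v) = res U1 ?V (incl U1) \<one>\<^bsub>R ?V\<^esub>"
      using ring_hom_mult[OF res_ring_hom[OF i1] _ v(1)] res_add_pow_one[OF i1] v(2) u1
        ring_hom_one[OF res_ring_hom[OF i1]] by simp
    show "res U2 ?V (incl U2) (?k \<otimes>\<^bsub>R ?V\<^esub> v) = res U2 ?V (incl U2) \<one>\<^bsub>R ?V\<^esub>"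
      using ring_hom_mult[OF res_ring_hom[OF i2] _ v(1)] res_add_pow_one[OF i2] v(3) u2
        ring_hom_one[OF res_ring_hom[OF i2]] by simp
  qed simp
  then show ?thesis
    using v(1) V.m_comm[OF _ v(1), of ?k] unfolding Units_def by auto
qed

lemma add_pow_one_Units_gset:
  assumes "gset G V"
    and "\<And>z. z \<in> V \<Longrightarrow> add_pow (R (orbit_set G (gstab z))) (n::nat) \<one>\<^bsub>R (orbit_set G (gstab z))\<^esub>
          \<in> Units (R (orbit_set G (gstab z)))"
  shows "add_pow (R V) n \<one>\<^bsub>R V\<^esub> \<in> Units (R V)"
  using assms
proof (induction "card V" arbitrary: V rule: less_induct)
  case less
  show ?case
  proof (cases "V = {}")
    case True
    interpret E: cring "R {}" using cring_R[OF gset_empty] .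
    obtain e where "carrier (R {}) = {e}"
      using carrier_R_empty by blast
    then have "carrier (R {}) = {\<one>\<^bsub>R {}\<^esub>}"
      using E.one_closed by auto
    then show ?thesis
      using True E.Units_one_closed E.add.nat_pow_closed[OF E.one_closed, of n] by simp
  next
    case False
    then obtain z where z: "z \<in> V" by auto
    have sz: "snd z \<subseteq> carrier G"
      using gsetD(2)[OF less.prems(1) z] .
    let ?O = "gorbit z"
    have gO: "gset G ?O" and gD: "gset G (V - ?O)"
      using gset_gorbit[OF sz] gset_Diff[OF less.prems(1) gset_gorbit[OF sz]] by auto
    have "card (V - ?O) < card V"
      using psubset_card_mono[OF gsetD(1)[OF less.prems(1)]] mem_gorbit_self[OF sz] z by blast
    then have "add_pow (R (V - ?O)) n \<one>\<^bsub>R (V - ?O)\<^esub> \<in> Units (R (V - ?O))"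
      using less.hyps[OF _ gD] less.prems(2) by auto
    moreover have "add_pow (R ?O) n \<one>\<^bsub>R ?O\<^esub> \<in> Units (R ?O)"
      using res_Units[OF gmap_gorbit_map[OF sz] less.prems(2)[OF z]] res_add_pow_one[OF gmap_gorbit_map[OF sz]]
      by simp
    moreover have "?O \<union> (V - ?O) = V"
      using gorbit_subset[OF less.prems(1) z] by auto
    ultimately show ?thesis
      using add_pow_one_Units_Un[OF gO gD, of n] by auto
  qed
qed

lemma tr_in_int_multiples:
  assumes f: "gmap G V Y f" and u: "add_pow (R V) (n::nat) \<one>\<^bsub>R V\<^esub> \<in> Units (R V)"
    and d: "d \<in> carrier (R V)"
  shows "\<exists>t\<in>carrier (R Y). tr V Y f d = add_pow (R Y) n \<one>\<^bsub>R Y\<^esub> \<otimes>\<^bsub>R Y\<^esub> t"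
proof -
  interpret V: cring "R V" using cring_R[OF gmapD(1)[OF f]] .
  interpret Y: cring "R Y" using cring_R[OF gmapD(2)[OF f]] .
  define e where "e = inv\<^bsub>R V\<^esub> (add_pow (R V) n \<one>\<^bsub>R V\<^esub>) \<otimes>\<^bsub>R V\<^esub> d"
  have e: "e \<in> carrier (R V)"
    unfolding e_def using u d by simp
  have "d = add_pow (R V) n \<one>\<^bsub>R V\<^esub> \<otimes>\<^bsub>R V\<^esub> e"
    unfolding e_def using u d by (simp add: V.m_assoc[symmetric])
  also have "\<dots> = add_pow (R V) n e"
    using V.add_pow_ldistr[OF V.one_closed e] e by simp
  finally have "tr V Y f d = add_pow (R Y) n (tr V Y f e)"
    using tr_add_pow[OF f e] by simp
  also have "\<dots> = add_pow (R Y) n \<one>\<^bsub>R Y\<^esub> \<otimes>\<^bsub>R Y\<^esub> tr V Y f e"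
    using Y.add_pow_ldistr[OF Y.one_closed tr_closed[OF f e]] tr_closed[OF f e] by simp
  finally show ?thesis
    using tr_closed[OF f e] by blast
qed

end

section \<open>The norm of a sum\<close>

context tambara
begin

lemma tr_fold_map:
  assumes a: "a \<in> carrier (R (free_copy 0))" and b: "b \<in> carrier (R (free_copy 0))"
    and x: "x \<in> carrier (R fold_dom)"
    and x0: "res (free_copy 0) fold_dom (incl (free_copy 0)) x = a"
    and x1: "res (free_copy 1) fold_dom (incl (free_copy 1)) x
      = res (free_copy 1) (free_copy 0) (restrict fold_map (free_copy 1)) b"
  shows "tr fold_dom (free_copy 0) fold_map x = a \<oplus>\<^bsub>R (free_copy 0)\<^esub> b"
proof -
  have \<sigma>: "gmap G (free_copy 1) (free_copy 0) (restrict fold_map (free_copy 1))"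
    using gmap_restrict[OF gmap_fold_map gset_free_copy] unfolding fold_dom_def by blast
  have "tr fold_dom (free_copy 0) fold_map x
    = tr (free_copy 0) (free_copy 0) (restrict fold_map (free_copy 0)) a
      \<oplus>\<^bsub>R (free_copy 0)\<^esub> tr (free_copy 1) (free_copy 0) (restrict fold_map (free_copy 1))
        (res (free_copy 1) (free_copy 0) (restrict fold_map (free_copy 1)) b)"
    using tr_Un[OF gset_free_copy gset_free_copy free_copy_disjoint, of 0 1 "free_copy 0" fold_map x]
      gmap_fold_map x x0 x1 unfolding fold_dom_def by simp
  then show ?thesis
    using fold_map_free_copy_0 tr_id[OF gset_free_copy a] tr_res_bij[OF \<sigma> fold_map_free_copy_1 b]
    by simp
qed

context
  fixes H assumes H: "subgroup H G"
begin

lemma gset_orbit_set_subgroup: "gset G (orbit_set G H)"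
  using gset_orbit_set[OF subgroup.subset[OF H]] .

lemma res_full_choices_nm:
  assumes x: "x \<in> carrier (R fold_dom)"
  shows "res (orbit_set G H) (choices H) (incl (orbit_set G H))
      (nm (pb_set H) (choices H) (pb_snd H) (res (pb_set H) fold_dom (pb_eval H) x))
    = nm (free_copy 0) (orbit_set G H) (coset_proj H) (res (free_copy 0) fold_dom (incl (free_copy 0)) x)"
proof -
  let ?Y = "orbit_set G H" and ?U0 = "free_copy 0"
  let ?W = "{w \<in> pb_set H. pb_snd H w \<in> ?Y}"
  have Y: "?Y \<subseteq> choices H"
    unfolding choices_def by blast
  have gW: "gset G ?W"
    using gset_preimage[OF gmap_pb_snd[OF H] gset_orbit_set_subgroup] .
  have iW: "gmap G ?W (pb_set H) (incl ?W)"
    using gmap_incl[OF gset_pb_set[OF H] gW] by auto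
  have q: "gmap G ?W ?U0 (restrict (pb_fst H) ?W)"
    using gmap_restrict[OF gmap_pb_fst[OF H] gW] by auto
  have i0: "gmap G ?U0 fold_dom (incl ?U0)"
    using gmap_incl[OF gset_fold_dom gset_free_copy] unfolding fold_dom_def by auto
  have "compose ?W (pb_eval H) (incl ?W) = compose ?W (incl ?U0) (restrict (pb_fst H) ?W)"
    using pb_eval_full[OF H] gmapD(3)[OF gmap_pb_fst[OF H]] by (intro ext) (auto simp: compose_def)
  then have "res ?W (pb_set H) (incl ?W) (res (pb_set H) fold_dom (pb_eval H) x)
      = res ?W ?U0 (restrict (pb_fst H) ?W) (res ?U0 fold_dom (incl ?U0) x)"
    using res_compose[OF iW gmap_pb_eval[OF H] x] res_compose[OF q i0 x] by simp
  then have "res ?Y (choices H) (incl ?Y) (nm (pb_set H) (choices H) (pb_snd H) (res (pb_set H) fold_dom (pb_eval H) x))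
      = nm ?W ?Y (restrict (pb_snd H) ?W) (res ?W ?U0 (restrict (pb_fst H) ?W) (res ?U0 fold_dom (incl ?U0) x))"
    using res_nm_preimage[OF gmap_pb_snd[OF H] gset_orbit_set_subgroup Y
        ring_hom_closed[OF res_ring_hom[OF gmap_pb_eval[OF H]] x]]
    by simp
  also have "\<dots> = res ?Y ?Y (restrict (choice_coset H) ?Y) (nm ?U0 ?Y (coset_proj H) (res ?U0 fold_dom (incl ?U0) x))"
    using res_nm_pullback[OF is_pullback_pb_set_restrict[OF H gset_orbit_set_subgroup Y]
        ring_hom_closed[OF res_ring_hom[OF i0] x]] by simp
  also have "\<dots> = nm ?U0 ?Y (coset_proj H) (res ?U0 fold_dom (incl ?U0) x)"
    using choice_coset_full[OF H] res_id[OF gset_orbit_set_subgroup]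
      nm_closed[OF gmap_coset_proj[OF H] ring_hom_closed[OF res_ring_hom[OF i0] x]] by simp
  finally show ?thesis .
qed

lemma res_empty_choices_nm:
  assumes x: "x \<in> carrier (R fold_dom)" and b: "b \<in> carrier (R (free_copy 0))"
    and x1: "res (free_copy 1) fold_dom (incl (free_copy 1)) x
      = res (free_copy 1) (free_copy 0) (restrict fold_map (free_copy 1)) b"
  shows "res (empty_choices H) (choices H) (incl (empty_choices H))
      (nm (pb_set H) (choices H) (pb_snd H) (res (pb_set H) fold_dom (pb_eval H) x))
    = res (empty_choices H) (orbit_set G H) (restrict (choice_coset H) (empty_choices H))
      (nm (free_copy 0) (orbit_set G H) (coset_proj H) b)"
proof -
  let ?Y = "orbit_set G H" and ?U0 = "free_copy 0" and ?U1 = "free_copy 1" and ?Z = "empty_choices H"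
  let ?W = "{w \<in> pb_set H. pb_snd H w \<in> ?Z}"
  let ?\<sigma> = "restrict fold_map ?U1"
  have Z: "?Z \<subseteq> choices H"
    unfolding choices_def by blast
  have gW: "gset G ?W"
    using gset_preimage[OF gmap_pb_snd[OF H] gset_empty_choices[OF H]] .
  have iW: "gmap G ?W (pb_set H) (incl ?W)"
    using gmap_incl[OF gset_pb_set[OF H] gW] by auto
  have e: "gmap G ?W ?U1 (restrict (pb_eval H) ?W)"
    by (rule gmap_cod[OF gmap_restrict[OF gmap_pb_eval[OF H] gW] gset_free_copy[of 1]])
      (use pb_eval_empty[OF H] in auto)
  have i1: "gmap G ?U1 fold_dom (incl ?U1)"
    using gmap_incl[OF gset_fold_dom gset_free_copy] unfolding fold_dom_def by auto
  have \<sigma>: "gmap G ?U1 ?U0 ?\<sigma>"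
    using gmap_restrict[OF gmap_fold_map gset_free_copy] unfolding fold_dom_def by blast
  have "compose ?W (pb_eval H) (incl ?W) = compose ?W (incl ?U1) (restrict (pb_eval H) ?W)"
    using pb_eval_empty[OF H] by (intro ext) (auto simp: compose_def)
  moreover have "compose ?W ?\<sigma> (restrict (pb_eval H) ?W) = restrict (pb_fst H) ?W"
    using pb_eval_empty[OF H] fold_map_pb_eval[OF H] by (intro ext) (auto simp: compose_def)
  ultimately have "res ?W (pb_set H) (incl ?W) (res (pb_set H) fold_dom (pb_eval H) x)
      = res ?W ?U0 (restrict (pb_fst H) ?W) b"
    using res_compose[OF iW gmap_pb_eval[OF H] x] res_compose[OF e i1 x] res_compose[OF e \<sigma> b] x1
    by simp
  then have "res ?Z (choices H) (incl ?Z) (nm (pb_set H) (choices H) (pb_snd H) (res (pb_set H) fold_dom (pb_eval H) x))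
      = nm ?W ?Z (restrict (pb_snd H) ?W) (res ?W ?U0 (restrict (pb_fst H) ?W) b)"
    using res_nm_preimage[OF gmap_pb_snd[OF H] gset_empty_choices[OF H] Z
        ring_hom_closed[OF res_ring_hom[OF gmap_pb_eval[OF H]] x]]
    by simp
  also have "\<dots> = res ?Z ?Y (restrict (choice_coset H) ?Z) (nm ?U0 ?Y (coset_proj H) b)"
    using res_nm_pullback[OF is_pullback_pb_set_restrict[OF H gset_empty_choices[OF H] Z] b] by simp
  finally show ?thesis .
qed

lemma tr_choice_coset_split:
  assumes c: "c \<in> carrier (R (choices H))"
  shows "tr (choices H) (orbit_set G H) (choice_coset H) c
    = res (orbit_set G H) (choices H) (incl (orbit_set G H)) c
      \<oplus>\<^bsub>R (orbit_set G H)\<^esub> tr (empty_choices H) (orbit_set G H) (restrict (choice_coset H) (empty_choices H))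
          (res (empty_choices H) (choices H) (incl (empty_choices H)) c)
      \<oplus>\<^bsub>R (orbit_set G H)\<^esub> tr (proper_choices H) (orbit_set G H) (restrict (choice_coset H) (proper_choices H))
          (res (proper_choices H) (choices H) (incl (proper_choices H)) c)"
proof -
  let ?Y = "orbit_set G H" and ?g = "choice_coset H"
  let ?Z2 = "empty_choices H" and ?Zr = "proper_choices H"
  let ?Z = "?Z2 \<union> ?Zr"
  interpret Y: cring "R ?Y" using cring_R[OF gset_orbit_set_subgroup] .
  have gZ: "gset G ?Z"
    using gset_Un[OF gset_empty_choices[OF H] gset_proper_choices[OF H]] .
  have sub: "?Y \<subseteq> choices H" "?Z \<subseteq> choices H"
    unfolding choices_def by auto
  have gmap_g: "gmap G V ?Y (restrict ?g V)" if "V \<subseteq> choices H" "gset G V" for V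
    using gmap_restrict[OF gmap_choice_coset[OF H] that(2,1)] .
  have res_c: "res V (choices H) (incl V) c \<in> carrier (R V)" if "V \<subseteq> choices H" "gset G V" for V
    using ring_hom_closed[OF res_ring_hom[OF gmap_incl[OF gset_choices[OF H] that(2,1)]] c] .
  define c' where "c' = res ?Z (choices H) (incl ?Z) c"
  have c': "c' \<in> carrier (R ?Z)"
    unfolding c'_def using res_c[OF sub(2) gZ] .
  have res_c': "res V ?Z (incl V) c' = res V (choices H) (incl V) c" if "V \<subseteq> ?Z" "gset G V" for V
    unfolding c'_def using res_incl_incl[OF gset_choices[OF H] gZ that(2,1) sub(2) c] .
  have split1: "tr (choices H) ?Y ?g c = tr ?Y ?Y (restrict ?g ?Y) (res ?Y (choices H) (incl ?Y) c)
      \<oplus>\<^bsub>R ?Y\<^esub> tr ?Z ?Y (restrict ?g ?Z) c'"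
    using tr_Un[OF gset_orbit_set_subgroup gZ choices_disjoint(1)[OF H], of ?Y ?g c] gmap_choice_coset[OF H] c
    unfolding c'_def choices_def by simp
  have split2: "tr ?Z ?Y (restrict ?g ?Z) c'
      = tr ?Z2 ?Y (restrict ?g ?Z2) (res ?Z2 (choices H) (incl ?Z2) c)
        \<oplus>\<^bsub>R ?Y\<^esub> tr ?Zr ?Y (restrict ?g ?Zr) (res ?Zr (choices H) (incl ?Zr) c)"
    using tr_Un[OF gset_empty_choices[OF H] gset_proper_choices[OF H] choices_disjoint(2)[OF H]
        gmap_g[OF sub(2) gZ] c'] res_c' gset_empty_choices[OF H] gset_proper_choices[OF H]
    by (simp add: Int_absorb1)
  have trY: "tr ?Y ?Y (restrict ?g ?Y) (res ?Y (choices H) (incl ?Y) c) = res ?Y (choices H) (incl ?Y) c"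
    unfolding choice_coset_full[OF H] using tr_id[OF gset_orbit_set_subgroup res_c[OF sub(1) gset_orbit_set_subgroup]] .
  have "?Z2 \<subseteq> choices H" "?Zr \<subseteq> choices H"
    using sub(2) by auto
  then show ?thesis
    unfolding split1 split2 trY
    using Y.a_assoc res_c[OF sub(1) gset_orbit_set_subgroup]
      tr_closed[OF gmap_g res_c] gset_empty_choices[OF H] gset_proper_choices[OF H]
    by simp
qed

lemma nm_add:
  assumes a: "a \<in> carrier (R (free_copy 0))" and b: "b \<in> carrier (R (free_copy 0))"
  obtains d where "d \<in> carrier (R (proper_choices H))"
    "nm (free_copy 0) (orbit_set G H) (coset_proj H) (a \<oplus>\<^bsub>R (free_copy 0)\<^esub> b)
      = nm (free_copy 0) (orbit_set G H) (coset_proj H) a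
        \<oplus>\<^bsub>R (orbit_set G H)\<^esub> nm (free_copy 0) (orbit_set G H) (coset_proj H) b
        \<oplus>\<^bsub>R (orbit_set G H)\<^esub> tr (proper_choices H) (orbit_set G H) (restrict (choice_coset H) (proper_choices H)) d"
proof -
  let ?Y = "orbit_set G H" and ?U0 = "free_copy 0" and ?U1 = "free_copy 1"
  let ?N = "nm ?U0 ?Y (coset_proj H)" and ?g = "choice_coset H" and ?Z2 = "empty_choices H"
  have \<sigma>: "gmap G ?U1 ?U0 (restrict fold_map ?U1)"
    using gmap_restrict[OF gmap_fold_map gset_free_copy] unfolding fold_dom_def by blast
  obtain x where x: "x \<in> carrier (R fold_dom)" "res ?U0 fold_dom (incl ?U0) x = a"
    "res ?U1 fold_dom (incl ?U1) x = res ?U1 ?U0 (restrict fold_map ?U1) b"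
    using R_Un_exists[OF gset_free_copy gset_free_copy free_copy_disjoint _
        ring_hom_closed[OF res_ring_hom[OF \<sigma>] b], of 0 a] a
    unfolding fold_dom_def by auto
  define c where "c = nm (pb_set H) (choices H) (pb_snd H) (res (pb_set H) fold_dom (pb_eval H) x)"
  have c: "c \<in> carrier (R (choices H))"
    unfolding c_def
    using nm_closed[OF gmap_pb_snd[OF H] ring_hom_closed[OF res_ring_hom[OF gmap_pb_eval[OF H]] x(1)]] .
  have "?N (a \<oplus>\<^bsub>R ?U0\<^esub> b) = tr (choices H) ?Y ?g c"
    using tr_fold_map[OF a b x] nm_tr_exponential[OF is_exponential_fold[OF H] gmap_coset_proj[OF H] x(1)]
    unfolding c_def by simp
  moreover have "res ?Y (choices H) (incl ?Y) c = ?N a"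
    using res_full_choices_nm[OF x(1)] unfolding c_def x(2) .
  moreover have "tr ?Z2 ?Y (restrict ?g ?Z2) (res ?Z2 (choices H) (incl ?Z2) c) = ?N b"
  proof -
    have "gmap G ?Z2 ?Y (restrict ?g ?Z2)"
      by (rule gmap_restrict[OF gmap_choice_coset[OF H] gset_empty_choices[OF H]]) (auto simp: choices_def)
    then show ?thesis
      using res_empty_choices_nm[OF x(1) b x(3)]
        tr_res_bij[OF _ bij_betw_choice_coset_empty[OF H] nm_closed[OF gmap_coset_proj[OF H] b]]
      unfolding c_def by simp
  qed
  moreover have "res (proper_choices H) (choices H) (incl (proper_choices H)) c \<in> carrier (R (proper_choices H))"
    using ring_hom_closed[OF res_ring_hom[OF gmap_incl[OF gset_choices[OF H] gset_proper_choices[OF H]]] c]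
    unfolding choices_def by blast
  ultimately show ?thesis
    using that tr_choice_coset_split[OF c] by metis
qed

lemma nm_additive_mod_int:
  assumes Zr: "add_pow (R (proper_choices H)) (n::nat) \<one>\<^bsub>R (proper_choices H)\<^esub> \<in> Units (R (proper_choices H))"
    and a: "a \<in> carrier (R (free_copy 0))" and b: "b \<in> carrier (R (free_copy 0))"
  shows "\<exists>t\<in>carrier (R (orbit_set G H)).
    nm (free_copy 0) (orbit_set G H) (coset_proj H) (a \<oplus>\<^bsub>R (free_copy 0)\<^esub> b)
      = nm (free_copy 0) (orbit_set G H) (coset_proj H) a
        \<oplus>\<^bsub>R (orbit_set G H)\<^esub> nm (free_copy 0) (orbit_set G H) (coset_proj H) b
        \<oplus>\<^bsub>R (orbit_set G H)\<^esub> add_pow (R (orbit_set G H)) n \<one>\<^bsub>R (orbit_set G H)\<^esub> \<otimes>\<^bsub>R (orbit_set G H)\<^esub> t"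
proof -
  let ?Y = "orbit_set G H" and ?Zr = "proper_choices H"
  have g: "gmap G ?Zr ?Y (restrict (choice_coset H) ?Zr)"
    by (rule gmap_restrict[OF gmap_choice_coset[OF H] gset_proper_choices[OF H]]) (auto simp: choices_def)
  obtain d where d: "d \<in> carrier (R ?Zr)"
    "nm (free_copy 0) ?Y (coset_proj H) (a \<oplus>\<^bsub>R (free_copy 0)\<^esub> b)
      = nm (free_copy 0) ?Y (coset_proj H) a \<oplus>\<^bsub>R ?Y\<^esub> nm (free_copy 0) ?Y (coset_proj H) b
        \<oplus>\<^bsub>R ?Y\<^esub> tr ?Zr ?Y (restrict (choice_coset H) ?Zr) d"
    using nm_add[OF a b] by blast
  obtain t where "t \<in> carrier (R ?Y)"
    "tr ?Zr ?Y (restrict (choice_coset H) ?Zr) d = add_pow (R ?Y) n \<one>\<^bsub>R ?Y\<^esub> \<otimes>\<^bsub>R ?Y\<^esub> t"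
    using tr_in_int_multiples[OF g Zr d(1)] by blast
  then show ?thesis
    using d(2) by (intro bexI[of _ t]) simp_all
qed

lemma add_pow_one_Units_step:
  assumes n0: "add_pow (R (free_copy 0)) (n::nat) \<one>\<^bsub>R (free_copy 0)\<^esub> \<in> Units (R (free_copy 0))"
    and IH: "\<And>K. subgroup K G \<Longrightarrow> card K < card H \<Longrightarrow>
      add_pow (R (orbit_set G K)) n \<one>\<^bsub>R (orbit_set G K)\<^esub> \<in> Units (R (orbit_set G K))"
  shows "add_pow (R (orbit_set G H)) n \<one>\<^bsub>R (orbit_set G H)\<^esub> \<in> Units (R (orbit_set G H))"
proof -
  let ?Y = "orbit_set G H" and ?U0 = "free_copy 0" and ?Zr = "proper_choices H"
  let ?N = "nm ?U0 ?Y (coset_proj H)" and ?k = "add_pow (R ?Y) n \<one>\<^bsub>R ?Y\<^esub>"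
  interpret Y: cring "R ?Y" using cring_R[OF gset_orbit_set_subgroup] .
  interpret U: cring "R ?U0" using cring_R[OF gset_free_copy] .
  have k: "?k \<in> carrier (R ?Y)" by simp
  have Zr: "add_pow (R ?Zr) n \<one>\<^bsub>R ?Zr\<^esub> \<in> Units (R ?Zr)"
  proof (rule add_pow_one_Units_gset[OF gset_proper_choices[OF H]])
    fix z assume z: "z \<in> ?Zr"
    show "add_pow (R (orbit_set G (gstab z))) n \<one>\<^bsub>R (orbit_set G (gstab z))\<^esub> \<in> Units (R (orbit_set G (gstab z)))"
      using IH[OF subgroup_gstab[OF gsetD(2)[OF gset_proper_choices[OF H] z]] card_gstab_proper_choices[OF H z]] .
  qed
  have "?N \<in> carrier (R ?U0) \<rightarrow> carrier (R ?Y)"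
    using nm_closed[OF gmap_coset_proj[OF H]] by auto
  then have "\<exists>t\<in>carrier (R ?Y). ?N (add_pow (R ?U0) n \<one>\<^bsub>R ?U0\<^esub>) = ?k \<oplus>\<^bsub>R ?Y\<^esub> ?k \<otimes>\<^bsub>R ?Y\<^esub> t"
    by (rule Y.add_pow_one_image_mod[OF U.ring_axioms k _ nm_one[OF gmap_coset_proj[OF H]]
          nm_additive_mod_int[OF Zr]])
  then obtain t where t: "t \<in> carrier (R ?Y)"
    "?N (add_pow (R ?U0) n \<one>\<^bsub>R ?U0\<^esub>) = ?k \<oplus>\<^bsub>R ?Y\<^esub> ?k \<otimes>\<^bsub>R ?Y\<^esub> t"
    by blast
  have hom: "?N \<in> hom (R ?U0) (R ?Y)"
    using nm_closed[OF gmap_coset_proj[OF H]] nm_mult[OF gmap_coset_proj[OF H]] by (auto simp: hom_def)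
  have "?N (add_pow (R ?U0) n \<one>\<^bsub>R ?U0\<^esub>) \<in> Units (R ?Y)"
    using hom_Units[OF hom nm_one[OF gmap_coset_proj[OF H]] n0] .
  moreover have "?N (add_pow (R ?U0) n \<one>\<^bsub>R ?U0\<^esub>) = ?k \<otimes>\<^bsub>R ?Y\<^esub> (\<one>\<^bsub>R ?Y\<^esub> \<oplus>\<^bsub>R ?Y\<^esub> t)"
    using t k by (simp add: Y.r_distr)
  ultimately show ?thesis
    using Y.unit_factor[OF _ k Y.add.m_closed[OF Y.one_closed t(1)]] by simp
qed

end

lemma add_pow_one_Units_subgroup:
  assumes n0: "add_pow (R (orbit_set G {\<one>})) (n::nat) \<one>\<^bsub>R (orbit_set G {\<one>})\<^esub> \<in> Units (R (orbit_set G {\<one>}))"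
    and H: "subgroup H G"
  shows "add_pow (R (orbit_set G H)) n \<one>\<^bsub>R (orbit_set G H)\<^esub> \<in> Units (R (orbit_set G H))"
  using H
proof (induction "card H" arbitrary: H rule: less_induct)
  case less
  then show ?case
    using add_pow_one_Units_step[OF less.prems] n0 unfolding free_copy_eq_orbit_set by blast
qed

lemma add_pow_one_Units_from_top:
  assumes top: "add_pow (R (orbit_set G (carrier G))) (n::nat) \<one>\<^bsub>R (orbit_set G (carrier G))\<^esub>
      \<in> Units (R (orbit_set G (carrier G)))"
    and H: "subgroup H G"
  shows "add_pow (R (orbit_set G H)) n \<one>\<^bsub>R (orbit_set G H)\<^esub> \<in> Units (R (orbit_set G H))"
proof -
  have "orbit_set G (carrier G) = {(0, carrier G)}"
    unfolding orbit_set_def using lcos_carrier by auto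
  then have "gmap G (orbit_set G H) (orbit_set G (carrier G)) (\<lambda>u\<in>orbit_set G H. (0, carrier G))"
    using gset_orbit_set[OF subgroup.subset[OF H]] gset_orbit_set[of "carrier G"] lcos_carrier
    by (intro gmapI) (auto simp: gsetD(3) gact_pair)
  then show ?thesis
    using res_Units[OF _ top] res_add_pow_one by metis
qed

lemma int_elem_Units_iff:
  "subgroup H G \<Longrightarrow> int_elem (R (orbit_set G H)) k \<in> Units (R (orbit_set G H))
    \<longleftrightarrow> add_pow (R (orbit_set G H)) (nat \<bar>k\<bar>) \<one>\<^bsub>R (orbit_set G H)\<^esub> \<in> Units (R (orbit_set G H))"
  unfolding int_elem_def
  by (rule cring.add_pow_int_one_Units_iff[OF cring_R[OF gset_orbit_set[OF subgroup.subset]]])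

end

theorem mainTheorem1:
  fixes G :: "('g, 'b) monoid_scheme"
    and R :: "'g gpt set \<Rightarrow> 'r ring"
    and res tr nm :: "'g gpt set \<Rightarrow> 'g gpt set \<Rightarrow> ('g gpt \<Rightarrow> 'g gpt) \<Rightarrow> 'r \<Rightarrow> 'r"
    and k :: int
  assumes "group G" and "finite (carrier G)"
    and "tambara_functor G R res tr nm"
  shows "(int_elem (R (orbit_set G (carrier G))) k \<in> Units (R (orbit_set G (carrier G)))
            \<longleftrightarrow> (\<forall>H. subgroup H G \<longrightarrow> int_elem (R (orbit_set G H)) k \<in> Units (R (orbit_set G H))))
       \<and> ((\<forall>H. subgroup H G \<longrightarrow> int_elem (R (orbit_set G H)) k \<in> Units (R (orbit_set G H)))
            \<longleftrightarrow> int_elem (R (orbit_set G {\<one>\<^bsub>G\<^esub>})) k \<in> Units (R (orbit_set G {\<one>\<^bsub>G\<^esub>})))"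
proof -
  interpret tambara G R res tr nm
    using assms by (simp add: tambara_def tambara_axioms_def finite_group_def finite_group_axioms_def)
  show ?thesis
    using int_elem_Units_iff add_pow_one_Units_from_top add_pow_one_Units_subgroup
      subgroup_self triv_subgroup by blast
qed

end
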